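(* Let $1 \le p < \infty$, let $L^p([0,1])$ denote the (complex) Lebesgue space on $[0,1]$ with Lebesgue measure $\lambda$, and let $T \in \mathcal{B}(L^p([0,1]))$ be a narrow operator. Then for every $\gamma \in \mathbb{C}$, $$\|I - T\|_{L^p \to L^p} + \inf_{\|u\|_{L^p} = 1} \|(\gamma I - T)u\|_{L^p} \ge \|I - \gamma \mathbf{E}\|_{L^p \to L^p},$$ and in particular $$\|I - T\|_{L^p \to L^p} + \inf_{\|u\|_{L^p} = 1} \|(I - T)u\|_{L^p} \ge C_p .$$
   Context: $\mathcal{B}(X)$ denotes the bounded linear operators on a Banach space $X$ and $I$ the identity operator. $\mathbf{E}$ is the operator $\mathbf{E}f := \left(\int_0^1 f\,d\lambda\right)\mathbf{1}$, where $\mathbf{1}$ is the constant function $1$ on $[0,1]$. A measurable function $g$ is a sign on a measurable set $A$ if $g$ takes values in $\{-1,0,1\}$ and $g^2 = \mathbb{I}_A$ (indicator of $A$); it is of mean zero if $\int g\,d\lambda = 0$. An operator $T \in \mathcal{B}(L^p([0,1]), Y)$ ($Y$ a Banach space) is narrow if for every measurable $A$ with $\lambda(A) > 0$ and every $\varepsilon > 0$ there exists a mean zero sign $g$ on $A$ with $\|Tg\| < \varepsilon$. The constant $C_p$ is defined by $C_1 := 2$ and, for $1 < p < \infty$, $$C_p := \max_{0 \le \alpha \le 1} \left(\alpha^{p-1} + (1-\alpha)^{p-1}\right)^{\frac1p} \left(\alpha^{\frac{1}{p-1}} + (1-\alpha)^{\frac{1}{p-1}}\right)^{1-\frac1p}.$$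 *)

theory Defs
  imports "HOL-Analysis.Analysis"
begin

text \<open>Elements of L^p are equivalence classes mod a.e. equality; operators are
  required to respect a.e. equality.\<close>

abbreviation M01 :: "real measure" where
  "M01 \<equiv> lebesgue_on {0..1}"

definition Lp_space :: "real \<Rightarrow> (real \<Rightarrow> complex) set" where
  "Lp_space p = {f. f \<in> borel_measurable M01 \<and> integrable M01 (\<lambda>x. cmod (f x) powr p)}"

definition lp_norm :: "real \<Rightarrow> (real \<Rightarrow> complex) \<Rightarrow> real" where
  "lp_norm p f = (\<integral>x. cmod (f x) powr p \<partial>M01) powr (1 / p)"

definition bounded_op :: "real \<Rightarrow> ((real \<Rightarrow> complex) \<Rightarrow> (real \<Rightarrow> complex)) \<Rightarrow> bool" where
  "bounded_op p T \<longleftrightarrow>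
     (\<forall>f\<in>Lp_space p. T f \<in> Lp_space p) \<and>
     (\<forall>f\<in>Lp_space p. \<forall>g\<in>Lp_space p. (AE x in M01. f x = g x) \<longrightarrow> (AE x in M01. T f x = T g x)) \<and>
     (\<forall>f\<in>Lp_space p. \<forall>g\<in>Lp_space p. \<forall>a b::complex.
        AE x in M01. T (\<lambda>y. a * f y + b * g y) x = a * T f x + b * T g x) \<and>
     (\<exists>C. \<forall>f\<in>Lp_space p. lp_norm p (T f) \<le> C * lp_norm p f)"

definition op_norm :: "real \<Rightarrow> ((real \<Rightarrow> complex) \<Rightarrow> (real \<Rightarrow> complex)) \<Rightarrow> real" where
  "op_norm p T = Sup {lp_norm p (T f) | f. f \<in> Lp_space p \<and> lp_norm p f = 1}"

definition idop :: "(real \<Rightarrow> complex) \<Rightarrow> (real \<Rightarrow> complex)" where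
  "idop f = f"

definition Eop :: "(real \<Rightarrow> complex) \<Rightarrow> (real \<Rightarrow> complex)" where
  "Eop f = (\<lambda>x. \<integral>y. f y \<partial>M01)"

definition op_diff :: "((real \<Rightarrow> complex) \<Rightarrow> (real \<Rightarrow> complex)) \<Rightarrow> ((real \<Rightarrow> complex) \<Rightarrow> (real \<Rightarrow> complex))
    \<Rightarrow> ((real \<Rightarrow> complex) \<Rightarrow> (real \<Rightarrow> complex))" where
  "op_diff S T = (\<lambda>f x. S f x - T f x)"

definition op_scale :: "complex \<Rightarrow> ((real \<Rightarrow> complex) \<Rightarrow> (real \<Rightarrow> complex)) \<Rightarrow> ((real \<Rightarrow> complex) \<Rightarrow> (real \<Rightarrow> complex))" where
  "op_scale c T = (\<lambda>f x. c * T f x)"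

definition is_sign_on :: "real set \<Rightarrow> (real \<Rightarrow> complex) \<Rightarrow> bool" where
  "is_sign_on A g \<longleftrightarrow> g \<in> borel_measurable M01 \<and>
     (\<forall>x\<in>{0..1}. g x \<in> {-1, 0, 1} \<and> (g x)\<^sup>2 = indicator A x)"

definition mean_zero :: "(real \<Rightarrow> complex) \<Rightarrow> bool" where
  "mean_zero g \<longleftrightarrow> (\<integral>x. g x \<partial>M01) = 0"

definition narrow :: "real \<Rightarrow> ((real \<Rightarrow> complex) \<Rightarrow> (real \<Rightarrow> complex)) \<Rightarrow> bool" where
  "narrow p T \<longleftrightarrow> (\<forall>A \<in> sets M01. measure M01 A > 0 \<longrightarrow>
     (\<forall>\<epsilon>>0. \<exists>g. is_sign_on A g \<and> mean_zero g \<and> lp_norm p (T g) < \<epsilon>))"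

definition Cp :: "real \<Rightarrow> real" where
  "Cp p = (if p = 1 then 2 else
     (SUP \<alpha>\<in>{0..1::real}. (\<alpha> powr (p - 1) + (1 - \<alpha>) powr (p - 1)) powr (1 / p)
        * (\<alpha> powr (1 / (p - 1)) + (1 - \<alpha>) powr (1 / (p - 1))) powr (1 - 1 / p)))"

end

theory Submission
  imports Defs
begin

text \<open>
  Let \<open>u\<close> be a unit vector. Narrowness lets one transplant an arbitrary function \<open>F\<close> onto \<open>u\<close>.
  If \<open>u\<close> is simple with level sets \<open>A\<^sub>a\<close>, repeated halving along mean zero signs splits every
  \<open>A\<^sub>a\<close> into \<open>K = 2\<^sup>k\<close> pieces \<open>Q\<^sub>a\<^sub>l\<close> of equal measure such that \<open>T \<one>\<^bsub>Q\<^sub>a\<^sub>l\<^esub>\<close> is, up to any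
  prescribed \<open>\<delta>\<close>, equal to \<open>T \<one>\<^bsub>A\<^sub>a\<^esub> / K\<close>. For a test vector \<open>d \<in> \<complex>\<^sup>K\<close> the function
  \<open>w = \<Sum> a d\<^sub>l \<one>\<^bsub>Q\<^sub>a\<^sub>l\<^esub>\<close> then satisfies \<open>\<parallel>w - c u\<parallel> = \<parallel>u\<parallel> \<parallel>d - c\<parallel>\<close> (normalised \<open>p\<close>-norm on the right)
  for every \<open>c\<close>, while \<open>T w \<approx> m T u\<close> with \<open>m\<close> the mean of \<open>d\<close>. Writing
  \<open>w - \<gamma> m u = (w - T w) + (T w - m T u) + m (T u - \<gamma> u)\<close> and using \<open>|m| \<le> \<parallel>d\<parallel>\<close> gives
  \<open>\<parallel>u\<parallel> \<parallel>d - \<gamma> m\<parallel> \<le> (\<parallel>I - T\<parallel> \<parallel>u\<parallel> + \<parallel>(\<gamma> - T) u\<parallel>) \<parallel>d\<parallel>\<close>.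
  Choosing \<open>d\<close> with the distribution of a simple \<open>F\<close> (first for dyadic weights, then by
  approximating the weights) and approximating in \<open>L\<^sup>p\<close> yields
  \<open>\<parallel>u\<parallel> \<parallel>F - \<gamma> \<integral>F\<parallel> \<le> (\<parallel>I - T\<parallel> \<parallel>u\<parallel> + \<parallel>(\<gamma> - T) u\<parallel>) \<parallel>F\<parallel>\<close>, which is the first claim.
  The second follows because \<open>I - E\<close> applied to suitable two-valued step functions shows
  \<open>\<parallel>I - E\<parallel> \<ge> C\<^sub>p\<close>.
\<close>

section \<open>The space \<open>L\<^sup>p([0,1])\<close>\<close>

lemma space_M01 [simp]: "space M01 = {0..1}"
  by (simp add: space_lebesgue_on)

lemma emeasure_M01_space: "emeasure M01 {0..1} = 1"
  by (simp add: emeasure_restrict_space)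

lemma finite_measure_M01: "finite_measure M01"
  by (rule finite_measureI) (simp add: emeasure_M01_space)

lemma measure_M01_space: "measure M01 {0..1} = 1"
  by (simp add: measure_def emeasure_M01_space)

lemma sets_M01_subset: "A \<in> sets M01 \<Longrightarrow> A \<subseteq> {0..1}"
  using sets.sets_into_space[of A M01] by simp

lemma integral_indicator_M01:
  assumes "A \<in> sets M01"
  shows "(\<integral>x. (indicator A x :: complex) \<partial>M01) = of_real (measure M01 A)"
proof -
  have "(\<integral>x. (indicator A x :: complex) \<partial>M01) = (\<integral>x. complex_of_real (indicator A x) \<partial>M01)"
    by (intro Bochner_Integration.integral_cong) (auto split: split_indicator)
  also have "\<dots> = of_real (measure M01 A)"
    using sets_M01_subset[OF assms] by (simp add: Int_absorb2)
  finally show ?thesis .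
qed

lemma measure_M01_interval:
  assumes "0 \<le> a" "a \<le> 1"
  shows "{0..a} \<in> sets M01" "{a<..1} \<in> sets M01"
    and "measure M01 {0..a} = a" "measure M01 {a<..1} = 1 - a"
proof -
  show A: "{0..a} \<in> sets M01" and B: "{a<..1} \<in> sets M01"
    using assms by (auto simp: sets_restrict_space_iff)
  show mA: "measure M01 {0..a} = a"
    using assms by (simp add: measure_restrict_space)
  have "{a<..1} = {0..1} - {0..a}"
    using assms by auto
  then show "measure M01 {a<..1} = 1 - a"
    using finite_measure.finite_measure_Diff[OF finite_measure_M01, of "{0..1}" "{0..a}"] A mA
      measure_M01_space assms
    by (auto simp: sets_restrict_space_iff)
qed

definition lp_integral :: "real \<Rightarrow> (real \<Rightarrow> complex) \<Rightarrow> real" where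
  "lp_integral p f = (\<integral>x. cmod (f x) powr p \<partial>M01)"

lemma lp_integral_nonneg: "0 \<le> lp_integral p f"
  unfolding lp_integral_def by (intro integral_nonneg_AE) auto

lemma lp_norm_eq_lp_integral: "lp_norm p f = lp_integral p f powr (1/p)"
  by (simp add: lp_norm_def lp_integral_def)

lemma lp_norm_nonneg: "0 \<le> lp_norm p f"
  by (simp add: lp_norm_def)

lemma lp_norm_powr: "0 < p \<Longrightarrow> lp_norm p f powr p = lp_integral p f"
  using lp_integral_nonneg[of p f] by (simp add: lp_norm_eq_lp_integral powr_powr)

lemma lp_integral_cong:
  assumes "\<And>x. x \<in> {0..1} \<Longrightarrow> f x = g x"
  shows "lp_integral p f = lp_integral p g"
  unfolding lp_integral_def using assms by (intro Bochner_Integration.integral_cong) auto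

lemma lp_norm_cong:
  assumes "\<And>x. x \<in> {0..1} \<Longrightarrow> f x = g x"
  shows "lp_norm p f = lp_norm p g"
  unfolding lp_norm_eq_lp_integral using lp_integral_cong[OF assms] by simp

lemma lp_norm_cong_AE:
  assumes "f \<in> borel_measurable M01" "g \<in> borel_measurable M01" "AE x in M01. f x = g x"
  shows "lp_norm p f = lp_norm p g"
proof -
  have "lp_integral p f = lp_integral p g"
    unfolding lp_integral_def using assms by (intro integral_cong_AE) (auto elim: AE_mp)
  then show ?thesis by (simp add: lp_norm_eq_lp_integral)
qed

lemma lp_norm_scale: "0 < p \<Longrightarrow> lp_norm p (\<lambda>x. c * f x) = cmod c * lp_norm p f"
  using lp_integral_nonneg[of p f]
  by (simp add: lp_norm_eq_lp_integral lp_integral_def norm_mult powr_mult powr_powr)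

lemma lp_norm_divide: "0 < p \<Longrightarrow> lp_norm p (\<lambda>x. f x / c) = lp_norm p f / cmod c"
  using lp_norm_scale[of p "inverse c" f] by (simp add: field_simps norm_divide)

lemma lp_norm_const: "0 < p \<Longrightarrow> lp_norm p (\<lambda>x. c) = cmod c"
  by (simp add: lp_norm_def powr_powr measure_M01_space)

lemma lp_norm_minus_commute: "lp_norm p (\<lambda>x. f x - g x) = lp_norm p (\<lambda>x. g x - f x)"
  by (simp add: lp_norm_def norm_minus_commute)

lemma lp_integral_indicator:
  assumes "A \<in> sets M01" "0 < p"
  shows "lp_integral p (indicator A) = measure M01 A"
proof -
  have "(\<lambda>x. cmod (indicator A x :: complex) powr p) = indicator A"
    using assms by (auto split: split_indicator)
  then show ?thesis
    unfolding lp_integral_def using sets_M01_subset[OF assms(1)] by (simp add: Int_absorb2)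
qed

lemma Lp_spaceI_bounded:
  assumes "f \<in> borel_measurable M01" "\<And>x. x \<in> {0..1} \<Longrightarrow> cmod (f x) \<le> B" "0 < p"
  shows "f \<in> Lp_space p"
  unfolding Lp_space_def
proof (intro CollectI conjI assms(1))
  show "integrable M01 (\<lambda>x. cmod (f x) powr p)"
  proof (rule Bochner_Integration.integrable_bound[where f="\<lambda>x. B powr p"])
    show "(\<lambda>x. cmod (f x) powr p) \<in> borel_measurable M01"
      using assms(1) by measurable
    show "AE x in M01. norm (cmod (f x) powr p) \<le> norm (B powr p)"
      using assms(2,3) by (auto intro!: AE_I2 powr_mono2 order.trans[OF _ abs_ge_self])
  qed simp
qed

lemma Lp_space_measurable: "f \<in> Lp_space p \<Longrightarrow> f \<in> borel_measurable M01"
  by (simp add: Lp_space_def)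

lemma Lp_space_integrable_powr: "f \<in> Lp_space p \<Longrightarrow> integrable M01 (\<lambda>x. cmod (f x) powr p)"
  by (simp add: Lp_space_def)

lemma powr_add_le:
  fixes a b p :: real
  assumes "0 \<le> a" "0 \<le> b" "0 < p"
  shows "(a + b) powr p \<le> 2 powr p * (a powr p + b powr p)"
proof -
  have "(a + b) powr p \<le> (2 * max a b) powr p"
    using assms by (intro powr_mono2) auto
  also have "\<dots> = 2 powr p * max a b powr p"
    using assms by (simp add: powr_mult)
  also have "\<dots> \<le> 2 powr p * (a powr p + b powr p)"
    using assms by (intro mult_left_mono) (auto simp: max_def)
  finally show ?thesis .
qed

lemma Lp_space_lincomb:
  assumes f: "f \<in> Lp_space p" and g: "g \<in> Lp_space p" and p: "0 < p"
  shows "(\<lambda>x. a * f x + b * g x) \<in> Lp_space p"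
  unfolding Lp_space_def
proof (intro CollectI conjI)
  show m: "(\<lambda>x. a * f x + b * g x) \<in> borel_measurable M01"
    using f g by (auto simp: Lp_space_def)
  let ?B = "\<lambda>x. 2 powr p * (cmod a powr p * cmod (f x) powr p + cmod b powr p * cmod (g x) powr p)"
  show "integrable M01 (\<lambda>x. cmod (a * f x + b * g x) powr p)"
  proof (rule Bochner_Integration.integrable_bound[where f="?B"])
    show "integrable M01 ?B"
      using f g by (auto simp: Lp_space_def)
    show "(\<lambda>x. cmod (a * f x + b * g x) powr p) \<in> borel_measurable M01"
      using m by measurable
    have "cmod (a * f x + b * g x) powr p \<le> ?B x" for x
    proof -
      have "cmod (a * f x + b * g x) powr p \<le> (cmod (a * f x) + cmod (b * g x)) powr p"
        using p by (intro powr_mono2 norm_triangle_ineq) auto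
      also have "\<dots> \<le> ?B x"
        using powr_add_le[of "cmod (a * f x)" "cmod (b * g x)" p] p by (simp add: norm_mult powr_mult)
      finally show ?thesis .
    qed
    then show "AE x in M01. norm (cmod (a * f x + b * g x) powr p) \<le> norm (?B x)"
      by (intro AE_I2) simp
  qed
qed

lemma Lp_space_scale: "f \<in> Lp_space p \<Longrightarrow> 0 < p \<Longrightarrow> (\<lambda>x. c * f x) \<in> Lp_space p"
  using Lp_space_lincomb[of f p f c 0] by simp

lemma Lp_space_divide: "f \<in> Lp_space p \<Longrightarrow> 0 < p \<Longrightarrow> (\<lambda>x. f x / c) \<in> Lp_space p"
  using Lp_space_scale[of f p "inverse c"] by (simp add: divide_inverse mult.commute)

lemma Lp_space_add: "f \<in> Lp_space p \<Longrightarrow> g \<in> Lp_space p \<Longrightarrow> 0 < p \<Longrightarrow> (\<lambda>x. f x + g x) \<in> Lp_space p"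
  using Lp_space_lincomb[of f p g 1 1] by simp

lemma Lp_space_diff: "f \<in> Lp_space p \<Longrightarrow> g \<in> Lp_space p \<Longrightarrow> 0 < p \<Longrightarrow> (\<lambda>x. f x - g x) \<in> Lp_space p"
  using Lp_space_lincomb[of f p g 1 "-1"] by simp

lemma Lp_space_const: "0 < p \<Longrightarrow> (\<lambda>x. c) \<in> Lp_space p"
  by (rule Lp_spaceI_bounded[where B="cmod c"]) auto

lemma Lp_space_sum:
  "finite I \<Longrightarrow> (\<And>i. i \<in> I \<Longrightarrow> f i \<in> Lp_space p) \<Longrightarrow> 0 < p \<Longrightarrow> (\<lambda>x. \<Sum>i\<in>I. f i x) \<in> Lp_space p"
proof (induction I rule: finite_induct)
  case empty
  then show ?case using Lp_space_const[of p 0] by simp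
next
  case (insert i I)
  then show ?case using Lp_space_add[of "f i" p "\<lambda>x. \<Sum>i\<in>I. f i x"] by simp
qed

lemma Lp_space_indicator: "A \<in> sets M01 \<Longrightarrow> 0 < p \<Longrightarrow> indicator A \<in> Lp_space p"
  by (rule Lp_spaceI_bounded[where B=1]) (auto split: split_indicator)

lemma Lp_space_simple_function:
  assumes v: "simple_function M01 v" and p: "0 < p"
  shows "v \<in> Lp_space p"
proof (rule Lp_spaceI_bounded[where B="Max (cmod ` v ` {0..1})"])
  have "finite (v ` {0..1})"
    using simple_functionD(1)[OF v] by simp
  then show "cmod (v x) \<le> Max (cmod ` v ` {0..1})" if "x \<in> {0..1}" for x
    using that by (intro Max_ge) auto
  show "v \<in> borel_measurable M01"
    using v by (rule borel_measurable_simple_function)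
qed (rule p)

lemma le_one_plus_powr:
  fixes x p :: real
  assumes "1 \<le> p" "0 \<le> x"
  shows "x \<le> 1 + x powr p"
proof (cases "x \<le> 1")
  case False
  then have "x powr 1 \<le> x powr p"
    using assms by (intro powr_mono) auto
  then show ?thesis
    using False by simp
next
  case True
  then show ?thesis
    by (simp add: add_increasing2)
qed

lemma Lp_space_integrable:
  assumes f: "f \<in> Lp_space p" and p: "1 \<le> p"
  shows "integrable M01 f"
proof (rule Bochner_Integration.integrable_bound[where f="\<lambda>x. 1 + cmod (f x) powr p"])
  show "integrable M01 (\<lambda>x. 1 + cmod (f x) powr p)"
    using f by (auto simp: Lp_space_def)
  show "AE x in M01. norm (f x) \<le> norm (1 + cmod (f x) powr p)"
  proof (rule AE_I2)
    fix x
    have "cmod (f x) \<le> 1 + cmod (f x) powr p"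
      using p by (intro le_one_plus_powr) auto
    then show "norm (f x) \<le> norm (1 + cmod (f x) powr p)"
      by simp
  qed
  show "f \<in> borel_measurable M01"
    using f by (rule Lp_space_measurable)
qed

lemma convex_on_powr_nonneg:
  assumes "1 \<le> p"
  shows "convex_on {0..} (\<lambda>x::real. x powr p)"
proof (rule convex_onI)
  fix t x y :: real
  assume t: "0 < t" "t < 1" and xy: "x \<in> {0..}" "y \<in> {0..}"
  have scaled: "(s * z) powr p \<le> s * z powr p" if "0 \<le> s" "s \<le> 1" "0 \<le> z" for s z :: real
  proof (cases "s = 0")
    case False
    then have "(s * z) powr p = s powr p * z powr p"
      using that by (simp add: powr_mult)
    also have "\<dots> \<le> s * z powr p"
      using powr_le_one_le[of s p] that assms False by (intro mult_right_mono) auto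
    finally show ?thesis .
  qed simp
  show "((1 - t) *\<^sub>R x + t *\<^sub>R y) powr p \<le> (1 - t) * x powr p + t * y powr p"
  proof (cases "x = 0 \<or> y = 0")
    case True
    then show ?thesis
      using scaled[of t y] scaled[of "1 - t" x] t xy by auto
  next
    case False
    then show ?thesis
      using convex_onD[OF powr_convex[OF assms], of t x y] t xy by auto
  qed
qed (simp add: convex_real_interval)

theorem lp_norm_triangle:
  assumes f: "f \<in> Lp_space p" and g: "g \<in> Lp_space p" and p: "1 \<le> p"
  shows "lp_norm p (\<lambda>x. f x + g x) \<le> lp_norm p f + lp_norm p g"
proof (rule field_le_epsilon)
  fix e :: real
  assume e: "0 < e"
  define a where "a = lp_norm p f + e / 2"
  define b where "b = lp_norm p g + e / 2"
  define t where "t = b / (a + b)"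
  have ab: "0 < a" "0 < b"
    using e lp_norm_nonneg[of p f] lp_norm_nonneg[of p g] unfolding a_def b_def by auto
  have t: "0 \<le> t" "t \<le> 1" "1 - t = a / (a + b)"
    using ab unfolding t_def by (auto simp: field_simps)
  have p0: "0 < p"
    using p by simp
  \<comment> \<open>Convexity of \<open>x powr p\<close>, applied to \<open>|f|/a\<close> and \<open>|g|/b\<close> with weights \<open>a/(a+b)\<close>, \<open>b/(a+b)\<close>.\<close>
  have pointwise: "cmod (f x + g x) powr p \<le>
      (a + b) powr p * ((1 - t) / a powr p * cmod (f x) powr p + t / b powr p * cmod (g x) powr p)" for x
  proof -
    have "(a + b) * ((1 - t) * (cmod (f x) / a) + t * (cmod (g x) / b)) = cmod (f x) + cmod (g x)"
      using ab unfolding t(3) unfolding t_def by (simp add: distrib_left)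
    then have "cmod (f x + g x) \<le> (a + b) * ((1 - t) * (cmod (f x) / a) + t * (cmod (g x) / b))"
      using norm_triangle_ineq[of "f x" "g x"] by simp
    then have "cmod (f x + g x) powr p \<le> ((a + b) * ((1 - t) * (cmod (f x) / a) + t * (cmod (g x) / b))) powr p"
      using p0 by (intro powr_mono2) auto
    also have "\<dots> = (a + b) powr p * ((1 - t) *\<^sub>R (cmod (f x) / a) + t *\<^sub>R (cmod (g x) / b)) powr p"
      using ab t by (simp add: powr_mult)
    also have "\<dots> \<le> (a + b) powr p * ((1 - t) * (cmod (f x) / a) powr p + t * (cmod (g x) / b) powr p)"
      using ab t by (intro mult_left_mono convex_onD[OF convex_on_powr_nonneg[OF p]]) auto
    finally show ?thesis
      using ab by (simp add: powr_divide)
  qed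
  have "lp_integral p (\<lambda>x. f x + g x) \<le>
      (a + b) powr p * ((1 - t) / a powr p * lp_integral p f + t / b powr p * lp_integral p g)"
  proof -
    have "lp_integral p (\<lambda>x. f x + g x) \<le> (\<integral>x. (a + b) powr p *
        ((1 - t) / a powr p * cmod (f x) powr p + t / b powr p * cmod (g x) powr p) \<partial>M01)"
      unfolding lp_integral_def
      using Lp_space_integrable_powr[OF Lp_space_add[OF f g p0]]
        Lp_space_integrable_powr[OF f] Lp_space_integrable_powr[OF g]
      by (intro integral_mono pointwise) auto
    then show ?thesis
      unfolding lp_integral_def using Lp_space_integrable_powr[OF f] Lp_space_integrable_powr[OF g]
      by simp
  qed
  also have "\<dots> \<le> (a + b) powr p * ((1 - t) * 1 + t * 1)"
  proof -
    have "lp_integral p f \<le> a powr p" "lp_integral p g \<le> b powr p"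
      using lp_norm_powr[OF p0] lp_norm_nonneg e p0 unfolding a_def b_def
      by (metis add_less_same_cancel1 half_gt_zero less_eq_real_def not_le powr_less_mono2)+
    then have "lp_integral p f / a powr p \<le> 1" "lp_integral p g / b powr p \<le> 1"
      using ab by (simp_all add: divide_le_eq_1_pos)
    then have "(1 - t) * (lp_integral p f / a powr p) + t * (lp_integral p g / b powr p) \<le> (1 - t) * 1 + t * 1"
      using t by (intro add_mono mult_left_mono) auto
    then show ?thesis
      by (intro mult_left_mono) auto
  qed
  finally have "lp_integral p (\<lambda>x. f x + g x) \<le> (a + b) powr p"
    by simp
  then have "lp_norm p (\<lambda>x. f x + g x) \<le> ((a + b) powr p) powr (1 / p)"
    unfolding lp_norm_eq_lp_integral using lp_integral_nonneg p0 by (intro powr_mono2) auto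
  then show "lp_norm p (\<lambda>x. f x + g x) \<le> lp_norm p f + lp_norm p g + e"
    using ab p0 unfolding a_def b_def by (simp add: powr_powr)
qed

lemma lp_norm_add_scaled_le:
  assumes "f \<in> Lp_space p" "g \<in> Lp_space p" "1 \<le> p"
  shows "lp_norm p (\<lambda>x. f x + c * g x) \<le> lp_norm p f + cmod c * lp_norm p g"
  using lp_norm_triangle[of f p "\<lambda>x. c * g x"] lp_norm_scale[of p c g] assms
  by (simp add: Lp_space_scale)

lemma lp_norm_diff_le:
  assumes "f \<in> Lp_space p" "g \<in> Lp_space p" "1 \<le> p"
  shows "lp_norm p (\<lambda>x. f x - g x) \<le> lp_norm p f + lp_norm p g"
  using lp_norm_add_scaled_le[OF assms, of "-1"] by simp

lemma lp_norm_sum_le: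
  assumes "finite I" "\<And>i. i \<in> I \<Longrightarrow> f i \<in> Lp_space p" "1 \<le> p"
  shows "lp_norm p (\<lambda>x. \<Sum>i\<in>I. f i x) \<le> (\<Sum>i\<in>I. lp_norm p (f i))"
  using assms
proof (induction I rule: finite_induct)
  case empty
  then show ?case
    using lp_norm_const[of p 0] by simp
next
  case (insert i I)
  then have "lp_norm p (\<lambda>x. f i x + (\<Sum>i\<in>I. f i x)) \<le> lp_norm p (f i) + lp_norm p (\<lambda>x. \<Sum>i\<in>I. f i x)"
    by (intro lp_norm_triangle Lp_space_sum) auto
  with insert show ?case
    by simp
qed

lemma lp_norm_reverse_triangle:
  assumes "f \<in> Lp_space p" "g \<in> Lp_space p" "1 \<le> p"
  shows "\<bar>lp_norm p f - lp_norm p g\<bar> \<le> lp_norm p (\<lambda>x. f x - g x)"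
  using lp_norm_triangle[of "\<lambda>x. f x - g x" p g] lp_norm_triangle[of "\<lambda>x. g x - f x" p f]
    lp_norm_minus_commute[of p f g] assms
  by (simp add: Lp_space_diff)

lemma tendsto_lp_norm:
  assumes "\<And>i. s i \<in> Lp_space p" "u \<in> Lp_space p" "1 \<le> p"
    and "(\<lambda>i. lp_norm p (\<lambda>x. s i x - u x)) \<longlonglongrightarrow> 0"
  shows "(\<lambda>i. lp_norm p (s i)) \<longlonglongrightarrow> lp_norm p u"
proof -
  have "(\<lambda>i. lp_norm p (s i) - lp_norm p u) \<longlonglongrightarrow> 0"
  proof (rule Lim_null_comparison)
    show "\<forall>\<^sub>F i in sequentially. norm (lp_norm p (s i) - lp_norm p u) \<le> lp_norm p (\<lambda>x. s i x - u x)"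
      using lp_norm_reverse_triangle[OF assms(1,2,3)] by (intro always_eventually allI) simp
  qed (rule assms(4))
  then have "(\<lambda>i. (lp_norm p (s i) - lp_norm p u) + lp_norm p u) \<longlonglongrightarrow> 0 + lp_norm p u"
    by (intro tendsto_add tendsto_const)
  then show ?thesis
    by simp
qed

lemma simple_function_approximation_Lp:
  assumes u: "u \<in> Lp_space p" and p: "1 \<le> p"
  obtains s where "\<And>i. simple_function M01 (s i)"
    "(\<lambda>i. lp_norm p (\<lambda>x. s i x - u x)) \<longlonglongrightarrow> 0"
    "(\<lambda>i. \<integral>x. s i x \<partial>M01) \<longlonglongrightarrow> (\<integral>x. u x \<partial>M01)"
proof -
  have p0: "0 < p"
    using p by simp
  have um: "u \<in> borel_measurable M01"
    using u by (rule Lp_space_measurable)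
  obtain s where s: "\<And>i. simple_function M01 (s i)"
    and lim: "\<And>x. x \<in> space M01 \<Longrightarrow> (\<lambda>i. s i x) \<longlonglongrightarrow> u x"
    and dom: "\<And>i x. x \<in> space M01 \<Longrightarrow> dist (s i x) 0 \<le> 2 * dist (u x) 0"
    using borel_measurable_implies_sequence_metric[OF um, of 0] by blast
  have sm: "\<And>i. s i \<in> borel_measurable M01"
    using s by (rule borel_measurable_simple_function)
  have "(\<lambda>i. lp_integral p (\<lambda>x. s i x - u x)) \<longlonglongrightarrow> (\<integral>x. 0 \<partial>M01)"
    unfolding lp_integral_def
  proof (rule integral_dominated_convergence[where w="\<lambda>x. 3 powr p * cmod (u x) powr p"])
    show "integrable M01 (\<lambda>x. 3 powr p * cmod (u x) powr p)"
      using Lp_space_integrable_powr[OF u] by simp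
    show "AE x in M01. (\<lambda>i. cmod (s i x - u x) powr p) \<longlonglongrightarrow> 0"
    proof (rule AE_I2)
      fix x
      assume x: "x \<in> space M01"
      have "(\<lambda>i. cmod (s i x - u x)) \<longlonglongrightarrow> cmod (u x - u x)"
        by (intro tendsto_norm tendsto_diff lim[OF x] tendsto_const)
      then show "(\<lambda>i. cmod (s i x - u x) powr p) \<longlonglongrightarrow> 0"
        using tendsto_powr'[of _ 0 sequentially "\<lambda>_. p" p] p0 by simp
    qed
    show "AE x in M01. norm (cmod (s i x - u x) powr p) \<le> 3 powr p * cmod (u x) powr p" for i
    proof (rule AE_I2)
      fix x
      assume x: "x \<in> space M01"
      have "cmod (s i x - u x) \<le> 3 * cmod (u x)"
        using norm_triangle_ineq4[of "s i x" "u x"] dom[OF x, of i] by (simp add: dist_norm)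
      then have "cmod (s i x - u x) powr p \<le> (3 * cmod (u x)) powr p"
        using p0 by (intro powr_mono2) auto
      then show "norm (cmod (s i x - u x) powr p) \<le> 3 powr p * cmod (u x) powr p"
        by (simp add: powr_mult)
    qed
    show "(\<lambda>x. cmod (s i x - u x) powr p) \<in> borel_measurable M01" for i
      using sm um by measurable
  qed simp
  then have "(\<lambda>i. lp_integral p (\<lambda>x. s i x - u x) powr (1 / p)) \<longlonglongrightarrow> 0 powr (1 / p)"
    using p0 lp_integral_nonneg by (intro tendsto_powr') auto
  then have "(\<lambda>i. lp_norm p (\<lambda>x. s i x - u x)) \<longlonglongrightarrow> 0"
    by (simp add: lp_norm_eq_lp_integral)
  moreover have "(\<lambda>i. \<integral>x. s i x \<partial>M01) \<longlonglongrightarrow> (\<integral>x. u x \<partial>M01)"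
  proof (rule integral_dominated_convergence[where w="\<lambda>x. 2 * cmod (u x)"])
    show "integrable M01 (\<lambda>x. 2 * cmod (u x))"
      using Lp_space_integrable[OF u p] by simp
    show "AE x in M01. (\<lambda>i. s i x) \<longlonglongrightarrow> u x"
      using lim by (intro AE_I2) auto
    show "AE x in M01. norm (s i x) \<le> 2 * cmod (u x)" for i
      using dom by (intro AE_I2) (auto simp: dist_norm)
  qed (use sm um in auto)
  ultimately show ?thesis
    using s that by blast
qed

section \<open>Step functions and finite distributions\<close>

lemma sum_indicator_disjoint:
  fixes c :: "'i \<Rightarrow> 'a::ring_1"
  assumes "finite I" "disjoint_family_on S I" "i \<in> I" "x \<in> S i"
  shows "(\<Sum>j\<in>I. c j * indicator (S j) x) = c i"
proof -
  have "(\<Sum>j\<in>I. c j * indicator (S j) x) = (\<Sum>j\<in>I. if j = i then c j else 0)"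
    using assms(2-4) by (intro sum.cong) (auto simp: disjoint_family_on_def split: split_indicator)
  then show ?thesis
    using assms(1,3) by simp
qed

lemma comp_sum_indicator_disjoint:
  fixes c :: "'i \<Rightarrow> 'a::ring_1" and g :: "'a \<Rightarrow> 'b::ring_1"
  assumes "finite I" "disjoint_family_on S I" "g 0 = 0"
  shows "g (\<Sum>i\<in>I. c i * indicator (S i) x) = (\<Sum>i\<in>I. g (c i) * indicator (S i) x)"
proof (cases "\<exists>i\<in>I. x \<in> S i")
  case True
  then obtain i where i: "i \<in> I" "x \<in> S i"
    by blast
  show ?thesis
    using sum_indicator_disjoint[OF assms(1,2) i, of c] sum_indicator_disjoint[OF assms(1,2) i, of "\<lambda>i. g (c i)"]
    by simp
next
  case False
  then show ?thesis
    using assms(3) by (simp add: indicator_def)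
qed

lemma integral_step_function:
  fixes c :: "'i \<Rightarrow> 'a::{real_normed_field, banach, second_countable_topology}"
  assumes "finite I" "\<And>i. i \<in> I \<Longrightarrow> S i \<in> sets M01"
  shows "(\<integral>x. (\<Sum>i\<in>I. c i * indicator (S i) x) \<partial>M01) = (\<Sum>i\<in>I. of_real (measure M01 (S i)) * c i)"
proof -
  have eq: "c i * indicator (S i) x = indicator (S i) x *\<^sub>R c i" for i x
    by (simp split: split_indicator)
  have fin: "emeasure M01 (S i) < \<infinity>" for i
    using finite_measure.emeasure_finite[OF finite_measure_M01] by (simp add: less_top)
  have "(\<integral>x. (\<Sum>i\<in>I. c i * indicator (S i) x) \<partial>M01) = (\<Sum>i\<in>I. \<integral>x. indicator (S i) x *\<^sub>R c i \<partial>M01)"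
    unfolding eq using assms fin by (intro Bochner_Integration.integral_sum integrable_scaleR_left integrable_real_indicator) auto
  also have "\<dots> = (\<Sum>i\<in>I. of_real (measure M01 (S i)) * c i)"
    using assms fin by (intro sum.cong refl) (simp add: sets_M01_subset Int_absorb2 scaleR_conv_of_real)
  finally show ?thesis .
qed

lemma lp_integral_step_function:
  assumes "finite I" "disjoint_family_on S I" "\<And>i. i \<in> I \<Longrightarrow> S i \<in> sets M01"
  shows "lp_integral p (\<lambda>x. \<Sum>i\<in>I. c i * indicator (S i) x) = (\<Sum>i\<in>I. measure M01 (S i) * cmod (c i) powr p)"
  unfolding lp_integral_def
  using comp_sum_indicator_disjoint[OF assms(1,2), of "\<lambda>z. cmod z powr p" c]
    integral_step_function[OF assms(1,3), where c="\<lambda>i. cmod (c i) powr p"]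
  by simp

definition level_set :: "(real \<Rightarrow> 'a) \<Rightarrow> 'a \<Rightarrow> real set" where
  "level_set F a = F -` {a} \<inter> {0..1}"

lemma disjoint_family_level_set: "disjoint_family_on (level_set F) R"
  by (auto simp: disjoint_family_on_def level_set_def)

lemma level_set_in_sets: "simple_function M01 F \<Longrightarrow> level_set F a \<in> sets M01"
  using simple_functionD(2)[of M01 F "{a}"] by (simp add: level_set_def)

lemma finite_range_simple_function: "simple_function M01 F \<Longrightarrow> finite (F ` {0..1})"
  using simple_functionD(1)[of M01 F] by simp

lemma sum_level_sets:
  fixes h :: "'a \<Rightarrow> 'b::ring_1"
  assumes "simple_function M01 F" "x \<in> {0..1}"
  shows "h (F x) = (\<Sum>a\<in>F ` {0..1}. h a * indicator (level_set F a) x)"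
  using sum_indicator_disjoint[OF finite_range_simple_function[OF assms(1)] disjoint_family_level_set, where i="F x" and x=x and c=h]
    assms(2) by (simp add: level_set_def)

lemma sum_measure_level_sets:
  assumes F: "simple_function M01 F"
  shows "(\<Sum>a\<in>F ` {0..1}. measure M01 (level_set F a)) = 1"
proof -
  have "measure M01 (\<Union>a\<in>F ` {0..1}. level_set F a) = (\<Sum>a\<in>F ` {0..1}. measure M01 (level_set F a))"
    using finite_range_simple_function[OF F] level_set_in_sets[OF F] disjoint_family_level_set
      finite_measure.emeasure_finite[OF finite_measure_M01]
    by (intro measure_finite_Union) auto
  moreover have "(\<Union>a\<in>F ` {0..1}. level_set F a) = {0..1}"
    by (auto simp: level_set_def)
  ultimately show ?thesis
    using measure_M01_space by simp
qed

definition weighted_lp_norm :: "real \<Rightarrow> 'a set \<Rightarrow> ('a \<Rightarrow> real) \<Rightarrow> ('a \<Rightarrow> complex) \<Rightarrow> real" where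
  "weighted_lp_norm p I w f = (\<Sum>i\<in>I. w i * cmod (f i) powr p) powr (1 / p)"

definition weighted_mean :: "'a set \<Rightarrow> ('a \<Rightarrow> real) \<Rightarrow> ('a \<Rightarrow> complex) \<Rightarrow> complex" where
  "weighted_mean I w f = (\<Sum>i\<in>I. of_real (w i) * f i)"

lemma lp_norm_simple_function:
  assumes F: "simple_function M01 F"
  shows "lp_norm p (\<lambda>x. h (F x)) = weighted_lp_norm p (F ` {0..1}) (\<lambda>a. measure M01 (level_set F a)) h"
proof -
  have "lp_integral p (\<lambda>x. h (F x)) = lp_integral p (\<lambda>x. \<Sum>a\<in>F ` {0..1}. h a * indicator (level_set F a) x)"
    using sum_level_sets[OF F] by (intro lp_integral_cong) auto
  then show ?thesis
    unfolding lp_norm_eq_lp_integral weighted_lp_norm_def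
    using lp_integral_step_function[OF finite_range_simple_function[OF F] disjoint_family_level_set
        level_set_in_sets[OF F]]
    by simp
qed

lemma integral_simple_function:
  fixes F :: "real \<Rightarrow> complex"
  assumes F: "simple_function M01 F"
  shows "(\<integral>x. F x \<partial>M01) = weighted_mean (F ` {0..1}) (\<lambda>a. measure M01 (level_set F a)) (\<lambda>a. a)"
proof -
  have "(\<integral>x. F x \<partial>M01) = (\<integral>x. (\<Sum>a\<in>F ` {0..1}. a * indicator (level_set F a) x) \<partial>M01)"
  proof (rule Bochner_Integration.integral_cong)
    show "F x = (\<Sum>a\<in>F ` {0..1}. a * indicator (level_set F a) x)" if "x \<in> space M01" for x
      using sum_level_sets[OF F, where h="\<lambda>a. a" and x=x] that by simp
  qed simp
  also have "\<dots> = (\<Sum>a\<in>F ` {0..1}. of_real (measure M01 (level_set F a)) * a)"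
    by (rule integral_step_function[OF finite_range_simple_function[OF F] level_set_in_sets[OF F]])
  finally show ?thesis
    unfolding weighted_mean_def .
qed

lemma norm_weighted_mean_le:
  assumes "finite I" "\<And>i. i \<in> I \<Longrightarrow> 0 \<le> w i" "(\<Sum>i\<in>I. w i) = 1" "1 \<le> p"
  shows "cmod (weighted_mean I w f) \<le> weighted_lp_norm p I w f"
proof -
  define m where "m = (\<Sum>i\<in>I. w i * cmod (f i))"
  have "cmod (weighted_mean I w f) \<le> m"
    unfolding weighted_mean_def m_def using assms(2)
    by (auto intro!: order.trans[OF norm_sum] sum_mono simp: norm_mult)
  moreover have "m powr p \<le> (\<Sum>i\<in>I. w i * cmod (f i) powr p)"
    unfolding m_def using assms
    by (intro convex_on_sum[OF _ _ convex_on_powr_nonneg, simplified]) auto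
  then have "m \<le> weighted_lp_norm p I w f"
    unfolding weighted_lp_norm_def
    using assms(4) powr_mono2[of "1 / p" "m powr p"] sum_nonneg[of I "\<lambda>i. w i * cmod (f i)"] assms(2)
    by (simp add: m_def powr_powr)
  ultimately show ?thesis
    by linarith
qed

lemma tendsto_powr_nonneg:
  fixes f :: "'a \<Rightarrow> real"
  assumes "(f \<longlongrightarrow> a) F" "\<And>x. 0 \<le> f x" "0 < b"
  shows "((\<lambda>x. f x powr b) \<longlongrightarrow> a powr b) F"
  using assms by (intro tendsto_powr') auto

lemma dyadic_approximation:
  fixes r :: "'a \<Rightarrow> real"
  assumes R: "finite R" "a0 \<in> R" and r: "\<And>a. a \<in> R \<Longrightarrow> 0 \<le> r a" "(\<Sum>a\<in>R. r a) = 1"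
  obtains N :: "nat \<Rightarrow> 'a \<Rightarrow> nat"
  where "\<And>k. (\<Sum>a\<in>R. N k a) = 2 ^ k" "\<And>a. a \<in> R \<Longrightarrow> (\<lambda>k. N k a / 2 ^ k) \<longlonglongrightarrow> r a"
proof -
  define R' where "R' = R - {a0}"
  have R': "finite R'" "R = insert a0 R'" "a0 \<notin> R'"
    unfolding R'_def using R by auto
  define F where "F k a = nat \<lfloor>2 ^ k * r a\<rfloor>" for k :: nat and a
  \<comment> \<open>Round down everywhere except at \<open>a0\<close>, which takes up the remaining mass.\<close>
  define N where "N k a = (if a = a0 then 2 ^ k - (\<Sum>b\<in>R'. F k b) else F k a)" for k :: nat and a
  have F_eq: "real (F k a) = of_int \<lfloor>2 ^ k * r a\<rfloor>" if "a \<in> R" for k a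
    using r(1)[OF that] unfolding F_def by simp
  have F_le: "real (F k a) \<le> 2 ^ k * r a" and F_ge: "2 ^ k * r a - 1 \<le> real (F k a)" if "a \<in> R" for k a
    using F_eq[OF that, of k] by linarith+
  have sum_F: "real (\<Sum>b\<in>R'. F k b) \<le> 2 ^ k" for k
  proof -
    have "real (\<Sum>b\<in>R'. F k b) \<le> (\<Sum>b\<in>R'. 2 ^ k * r b)"
      using F_le R' by (auto intro: sum_mono)
    also have "\<dots> \<le> (\<Sum>b\<in>R. 2 ^ k * r b)"
      using R' r(1) by (intro sum_mono2) auto
    finally show ?thesis
      using r(2) by (simp add: sum_distrib_left[symmetric])
  qed
  then have sum_F_nat: "(\<Sum>b\<in>R'. F k b) \<le> 2 ^ k" for k
    by (metis of_nat_le_iff of_nat_numeral of_nat_power)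
  have "(\<Sum>a\<in>R. N k a) = 2 ^ k" for k
  proof -
    have "(\<Sum>a\<in>R'. N k a) = (\<Sum>a\<in>R'. F k a)"
      unfolding N_def using R' by (intro sum.cong) auto
    then show ?thesis
      using R' sum_F_nat[of k] by (simp add: N_def)
  qed
  moreover have lim_R': "(\<lambda>k. N k a / 2 ^ k) \<longlonglongrightarrow> r a" if "a \<in> R'" for a
  proof (rule tendsto_sandwich[where f="\<lambda>k. r a - inverse (2 ^ k)" and h="\<lambda>_. r a"])
    have aR: "a \<in> R" "a \<noteq> a0"
      using that R' by auto
    show "\<forall>\<^sub>F k in sequentially. r a - inverse (2 ^ k) \<le> real (N k a) / 2 ^ k"
    proof (intro always_eventually allI)
      fix k :: nat
      have "r a - inverse (2 ^ k) = (2 ^ k * r a - 1) / 2 ^ k"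
        by (simp add: field_simps)
      also have "\<dots> \<le> real (N k a) / 2 ^ k"
        using F_ge[OF aR(1), of k] aR(2) by (simp add: N_def divide_right_mono)
      finally show "r a - inverse (2 ^ k) \<le> real (N k a) / 2 ^ k" .
    qed
    show "\<forall>\<^sub>F k in sequentially. real (N k a) / 2 ^ k \<le> r a"
      using F_le[OF aR(1)] aR(2) by (intro always_eventually allI) (simp add: N_def pos_divide_le_eq mult.commute)
    show "(\<lambda>k. r a - inverse (2 ^ k)) \<longlonglongrightarrow> r a"
      using tendsto_diff[OF tendsto_const LIMSEQ_inverse_realpow_zero[of 2]] by simp
  qed simp
  moreover have "(\<lambda>k. N k a0 / 2 ^ k) \<longlonglongrightarrow> r a0"
  proof -
    have "real (N k a0) / 2 ^ k = 1 - (\<Sum>b\<in>R'. N k b / 2 ^ k)" for k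
    proof -
      have "(\<Sum>b\<in>R'. N k b / 2 ^ k) = (\<Sum>b\<in>R'. real (F k b)) / 2 ^ k"
        unfolding N_def sum_divide_distrib using R'(3) by (intro sum.cong) auto
      then show ?thesis
        using sum_F_nat[of k] by (simp add: N_def of_nat_diff field_simps)
    qed
    moreover have "(\<lambda>k. 1 - (\<Sum>b\<in>R'. N k b / 2 ^ k)) \<longlonglongrightarrow> 1 - (\<Sum>b\<in>R'. r b)"
      by (intro tendsto_intros lim_R')
    moreover have "1 - (\<Sum>b\<in>R'. r b) = r a0"
      using r(2) R' by simp
    ultimately show ?thesis
      by simp
  qed
  ultimately show ?thesis
    using that R' by blast
qed

lemma enumeration_with_multiplicities:
  assumes "finite R"
  obtains \<sigma> :: "nat \<Rightarrow> 'a"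
  where "\<And>l. l < (\<Sum>a\<in>R. N a) \<Longrightarrow> \<sigma> l \<in> R"
    "\<And>a. a \<in> R \<Longrightarrow> card {l. l < (\<Sum>a\<in>R. N a) \<and> \<sigma> l = a} = N a"
proof -
  have "\<exists>\<sigma>. (\<forall>l < (\<Sum>a\<in>R. N a). \<sigma> l \<in> R) \<and> (\<forall>a\<in>R. card {l. l < (\<Sum>a\<in>R. N a) \<and> \<sigma> l = a} = N a)"
    using assms
  proof (induction R rule: finite_induct)
    case (insert b R)
    then obtain \<sigma> where \<sigma>: "\<forall>l < (\<Sum>a\<in>R. N a). \<sigma> l \<in> R"
      "\<forall>a\<in>R. card {l. l < (\<Sum>a\<in>R. N a) \<and> \<sigma> l = a} = N a"
      by blast
    define S where "S = (\<Sum>a\<in>R. N a)"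
    define \<tau> where "\<tau> l = (if l < S then \<sigma> l else b)" for l
    have total: "(\<Sum>a\<in>insert b R. N a) = S + N b"
      using insert unfolding S_def by simp
    have "card {l. l < S + N b \<and> \<tau> l = a} = N a" if "a \<in> insert b R" for a
    proof (cases "a = b")
      case True
      have \<tau>_b: "\<tau> l = b \<longleftrightarrow> \<not> l < S" for l
        using \<sigma>(1) insert(2) unfolding \<tau>_def S_def by auto
      have "{l. l < S + N b \<and> \<tau> l = a} = {S..<S + N b}"
      proof (rule set_eqI)
        fix l
        show "l \<in> {l. l < S + N b \<and> \<tau> l = a} \<longleftrightarrow> l \<in> {S..<S + N b}"
          unfolding True mem_Collect_eq atLeastLessThan_iff \<tau>_b by linarith
      qed
      then show ?thesis
        using True by simp
    next
      case False
      then have "{l. l < S + N b \<and> \<tau> l = a} = {l. l < S \<and> \<sigma> l = a}"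
        unfolding \<tau>_def by auto
      then show ?thesis
        using \<sigma>(2) False that unfolding S_def by simp
    qed
    moreover have "\<tau> l \<in> insert b R" if "l < S + N b" for l
      using \<sigma>(1) unfolding \<tau>_def S_def by auto
    ultimately show ?case
      unfolding total by blast
  qed simp
  then show ?thesis
    using that by blast
qed

lemma sum_enumeration:
  fixes h :: "'a \<Rightarrow> 'b::comm_semiring_1" and \<sigma> :: "nat \<Rightarrow> 'a"
  assumes "finite R" "\<And>l. l < K \<Longrightarrow> \<sigma> l \<in> R" "\<And>a. a \<in> R \<Longrightarrow> card {l. l < K \<and> \<sigma> l = a} = N a"
  shows "(\<Sum>l<K. h (\<sigma> l)) = (\<Sum>a\<in>R. of_nat (N a) * h a)"
proof -
  have "(\<Sum>l<K. h (\<sigma> l)) = (\<Sum>a\<in>R. \<Sum>l\<in>{l \<in> {..<K}. \<sigma> l = a}. h (\<sigma> l))"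
    using assms(1,2) by (intro sum.group[symmetric]) auto
  also have "\<dots> = (\<Sum>a\<in>R. of_nat (N a) * h a)"
  proof (intro sum.cong refl)
    fix a
    assume "a \<in> R"
    then have "card {l \<in> {..<K}. \<sigma> l = a} = N a"
      using assms(3) by simp
    then show "(\<Sum>l\<in>{l \<in> {..<K}. \<sigma> l = a}. h (\<sigma> l)) = of_nat (N a) * h a"
      by simp
  qed
  finally show ?thesis .
qed

lemma weighted_enumeration:
  fixes \<sigma> :: "nat \<Rightarrow> 'a"
  assumes "finite R" "\<And>l. l < K \<Longrightarrow> \<sigma> l \<in> R" "\<And>a. a \<in> R \<Longrightarrow> card {l. l < K \<and> \<sigma> l = a} = N a"
  shows "weighted_lp_norm p {..<K} (\<lambda>_. 1 / K) (\<lambda>l. h (\<sigma> l)) = weighted_lp_norm p R (\<lambda>a. N a / K) h"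
    and "weighted_mean {..<K} (\<lambda>_. 1 / K) (\<lambda>l. h (\<sigma> l)) = weighted_mean R (\<lambda>a. N a / K) h"
  using sum_enumeration[OF assms, of "\<lambda>a. cmod (h a) powr p"] sum_enumeration[OF assms, of h]
  unfolding weighted_lp_norm_def weighted_mean_def
  by (simp_all add: sum_distrib_left[symmetric] sum_divide_distrib[symmetric] field_simps)

definition equipartition :: "real set \<Rightarrow> nat \<Rightarrow> (nat \<Rightarrow> real set) \<Rightarrow> bool" where
  "equipartition A K Q \<longleftrightarrow> disjoint_family_on Q {..<K} \<and> (\<Union>l<K. Q l) = A \<and>
     (\<forall>l<K. Q l \<in> sets M01 \<and> measure M01 (Q l) = measure M01 A / K)"

lemma equipartition_trivial: "A \<in> sets M01 \<Longrightarrow> equipartition A 1 (\<lambda>_. A)"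
  by (auto simp: equipartition_def disjoint_family_on_def)

lemma equipartition_double:
  assumes Q: "equipartition A K Q"
    and H: "\<And>l. l < K \<Longrightarrow> H l \<in> sets M01 \<and> H l \<subseteq> Q l \<and> measure M01 (H l) = measure M01 (Q l) / 2"
  shows "equipartition A (2 * K) (\<lambda>m. if even m then H (m div 2) else Q (m div 2) - H (m div 2))"
    (is "equipartition A (2 * K) ?Q")
proof -
  have Qd: "disjoint_family_on Q {..<K}" and QU: "(\<Union>l<K. Q l) = A"
    and Qm: "\<And>l. l < K \<Longrightarrow> Q l \<in> sets M01 \<and> measure M01 (Q l) = measure M01 A / K"
    using Q unfolding equipartition_def by auto
  have sub: "?Q m \<subseteq> Q (m div 2)" if "m < 2 * K" for m
    using H[of "m div 2"] that by auto
  have "disjoint_family_on ?Q {..<2 * K}"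
    unfolding disjoint_family_on_def
  proof (intro ballI impI)
    fix m m'
    assume m: "m \<in> {..<2 * K}" "m' \<in> {..<2 * K}" "m \<noteq> m'"
    show "?Q m \<inter> ?Q m' = {}"
    proof (cases "m div 2 = m' div 2")
      case True
      then have "even m \<noteq> even m'"
        using m(3) by (metis div_mult_mod_eq mod2_eq_if)
      then show ?thesis
        using True by auto
    next
      case False
      then show ?thesis
        using sub[of m] sub[of m'] Qd m unfolding disjoint_family_on_def by fastforce
    qed
  qed
  moreover have "(\<Union>m<2 * K. ?Q m) = A"
  proof
    show "(\<Union>m<2 * K. ?Q m) \<subseteq> A"
      using sub QU by fastforce
    show "A \<subseteq> (\<Union>m<2 * K. ?Q m)"
    proof
      fix x
      assume "x \<in> A"
      then obtain l where l: "l < K" "x \<in> Q l"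
        using QU by auto
      then have "x \<in> ?Q (2 * l) \<or> x \<in> ?Q (2 * l + 1)"
        by auto
      moreover have "2 * l < 2 * K" "2 * l + 1 < 2 * K"
        using l(1) by auto
      ultimately show "x \<in> (\<Union>m<2 * K. ?Q m)"
        by blast
    qed
  qed
  moreover have "?Q m \<in> sets M01 \<and> measure M01 (?Q m) = measure M01 A / (2 * K)" if "m < 2 * K" for m
  proof -
    have l: "m div 2 < K"
      using that by auto
    have "measure M01 (Q (m div 2) - H (m div 2)) = measure M01 (Q (m div 2)) - measure M01 (H (m div 2))"
      using H[OF l] Qm[OF l] by (intro finite_measure.finite_measure_Diff[OF finite_measure_M01]) auto
    then show ?thesis
      using H[OF l] Qm[OF l] by auto
  qed
  ultimately show ?thesis
    unfolding equipartition_def by auto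
qed

lemma disjoint_family_on_refinement:
  assumes "disjoint_family_on A R" "\<And>a. a \<in> R \<Longrightarrow> disjoint_family_on (Q a) L"
    and "\<And>a l. a \<in> R \<Longrightarrow> l \<in> L \<Longrightarrow> Q a l \<subseteq> A a"
  shows "disjoint_family_on (\<lambda>i. Q (fst i) (snd i)) (R \<times> L)"
  unfolding disjoint_family_on_def
proof (intro ballI impI)
  fix i j
  assume ij: "i \<in> R \<times> L" "j \<in> R \<times> L" "i \<noteq> j"
  show "Q (fst i) (snd i) \<inter> Q (fst j) (snd j) = {}"
  proof (cases "fst i = fst j")
    case True
    then have "snd i \<noteq> snd j"
      using ij(3) by (simp add: prod_eq_iff)
    then show ?thesis
      using assms(2)[of "fst i"] ij True unfolding disjoint_family_on_def by (auto simp: mem_Times_iff)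
  next
    case False
    then have "A (fst i) \<inter> A (fst j) = {}"
      using assms(1) ij unfolding disjoint_family_on_def by (auto simp: mem_Times_iff)
    then show ?thesis
      using assms(3)[of "fst i" "snd i"] assms(3)[of "fst j" "snd j"] ij by (auto simp: mem_Times_iff)
  qed
qed

lemma tensor_step_function:
  fixes v :: "real \<Rightarrow> complex"
  assumes v: "simple_function M01 v" and K: "0 < K"
    and Q: "\<forall>a\<in>v ` {0..1}. equipartition (level_set v a) K (Q a)"
  shows "finite (v ` {0..1} \<times> {..<K})"
    and "disjoint_family_on (\<lambda>i. Q (fst i) (snd i)) (v ` {0..1} \<times> {..<K})"
    and "\<And>i. i \<in> v ` {0..1} \<times> {..<K} \<Longrightarrow> Q (fst i) (snd i) \<in> sets M01"
    and "\<And>x. x \<in> {0..1} \<Longrightarrow> v x = (\<Sum>i\<in>v ` {0..1} \<times> {..<K}. fst i * indicator (Q (fst i) (snd i)) x)"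
    and "lp_norm p (\<lambda>x. \<Sum>i\<in>v ` {0..1} \<times> {..<K}. (fst i * e (snd i)) * indicator (Q (fst i) (snd i)) x)
           = lp_norm p v * weighted_lp_norm p {..<K} (\<lambda>_. 1 / K) e"
proof -
  have Qd: "\<And>a. a \<in> v ` {0..1} \<Longrightarrow> disjoint_family_on (Q a) {..<K}"
    and QU: "\<And>a. a \<in> v ` {0..1} \<Longrightarrow> (\<Union>l<K. Q a l) = level_set v a"
    and Qm: "\<And>a l. a \<in> v ` {0..1} \<Longrightarrow> l < K \<Longrightarrow>
      Q a l \<in> sets M01 \<and> measure M01 (Q a l) = measure M01 (level_set v a) / K"
    using Q unfolding equipartition_def by auto
  define I where "I = v ` {0..1} \<times> {..<K}"
  have sub: "Q a l \<subseteq> level_set v a" if "a \<in> v ` {0..1}" "l < K" for a l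
    using QU[OF that(1)] that(2) by blast
  have sum_I: "(\<Sum>i\<in>I. h i) = (\<Sum>a\<in>v ` {0..1}. \<Sum>l<K. h (a, l))" for h :: "complex \<times> nat \<Rightarrow> real"
    unfolding I_def by (simp add: sum.cartesian_product)
  have fin: "finite I"
    unfolding I_def using finite_range_simple_function[OF v] by simp
  have sets: "Q (fst i) (snd i) \<in> sets M01" if "i \<in> I" for i
    using Qm that unfolding I_def by (auto simp: mem_Times_iff)
  have disj: "disjoint_family_on (\<lambda>i. Q (fst i) (snd i)) I"
    unfolding I_def
    by (rule disjoint_family_on_refinement[where A="level_set v"]) (use Qd sub disjoint_family_level_set in auto)
  have rep: "v x = (\<Sum>i\<in>I. fst i * indicator (Q (fst i) (snd i)) x)" if x: "x \<in> {0..1}" for x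
  proof -
    have "x \<in> level_set v (v x)"
      using x by (simp add: level_set_def)
    then obtain l where l: "l < K" "x \<in> Q (v x) l"
      using QU[of "v x"] x by auto
    then have "(v x, l) \<in> I"
      using x unfolding I_def by simp
    from sum_indicator_disjoint[OF fin disj this, where c=fst] l(2)
    show ?thesis
      by simp
  qed
  have "lp_integral p (\<lambda>x. \<Sum>i\<in>I. (fst i * e (snd i)) * indicator (Q (fst i) (snd i)) x)
      = (\<Sum>i\<in>I. measure M01 (Q (fst i) (snd i)) * cmod (fst i * e (snd i)) powr p)"
    by (rule lp_integral_step_function[OF fin disj sets])
  also have "\<dots> = (\<Sum>a\<in>v ` {0..1}. \<Sum>l<K.
      (measure M01 (level_set v a) * cmod a powr p) * (1 / K * cmod (e l) powr p))"
    unfolding sum_I using Qm by (intro sum.cong refl) (simp add: norm_mult powr_mult)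
  also have "\<dots> = (\<Sum>a\<in>v ` {0..1}. measure M01 (level_set v a) * cmod a powr p)
      * (\<Sum>l<K. 1 / K * cmod (e l) powr p)"
    by (rule sum_product[symmetric])
  finally have "lp_norm p (\<lambda>x. \<Sum>i\<in>I. (fst i * e (snd i)) * indicator (Q (fst i) (snd i)) x)
      = lp_norm p v * weighted_lp_norm p {..<K} (\<lambda>_. 1 / K) e"
    using lp_norm_simple_function[OF v, of p "\<lambda>a. a"]
    unfolding lp_norm_eq_lp_integral weighted_lp_norm_def
    by (simp add: powr_mult sum_nonneg)
  then show "lp_norm p (\<lambda>x. \<Sum>i\<in>v ` {0..1} \<times> {..<K}. (fst i * e (snd i)) * indicator (Q (fst i) (snd i)) x)
      = lp_norm p v * weighted_lp_norm p {..<K} (\<lambda>_. 1 / K) e"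
    unfolding I_def .
  show "finite (v ` {0..1} \<times> {..<K})"
    using fin unfolding I_def .
  show "disjoint_family_on (\<lambda>i. Q (fst i) (snd i)) (v ` {0..1} \<times> {..<K})"
    using disj unfolding I_def .
  show "\<And>i. i \<in> v ` {0..1} \<times> {..<K} \<Longrightarrow> Q (fst i) (snd i) \<in> sets M01"
    using sets unfolding I_def .
  show "\<And>x. x \<in> {0..1} \<Longrightarrow> v x = (\<Sum>i\<in>v ` {0..1} \<times> {..<K}. fst i * indicator (Q (fst i) (snd i)) x)"
    using rep unfolding I_def .
qed

section \<open>Bounded operators on \<open>L\<^sup>p([0,1])\<close>\<close>

lemma op_norm_le:
  assumes "0 < p" "\<And>f. f \<in> Lp_space p \<Longrightarrow> lp_norm p f = 1 \<Longrightarrow> lp_norm p (S f) \<le> B"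
  shows "op_norm p S \<le> B"
  unfolding op_norm_def
  using Lp_space_const[OF assms(1), of 1] lp_norm_const[OF assms(1), of 1] assms(2)
  by (intro cSup_least) auto

lemma lp_norm_le_op_norm:
  assumes bdd: "bdd_above {lp_norm p (S f) |f. f \<in> Lp_space p \<and> lp_norm p f = 1}"
    and hom: "\<And>c. lp_norm p (S (\<lambda>x. c * f x)) = cmod c * lp_norm p (S f)"
    and f: "f \<in> Lp_space p" "0 < lp_norm p f" and p: "0 < p"
  shows "lp_norm p (S f) \<le> op_norm p S * lp_norm p f"
proof -
  define c where "c = complex_of_real (1 / lp_norm p f)"
  have "lp_norm p (\<lambda>x. c * f x) = 1"
    using f(2) p unfolding c_def by (simp add: lp_norm_divide)
  then have "lp_norm p (S (\<lambda>x. c * f x)) \<le> op_norm p S"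
    unfolding op_norm_def using f p by (intro cSup_upper bdd) (auto intro: Lp_space_scale)
  then show ?thesis
    using f(2) unfolding hom c_def by (simp add: norm_divide pos_divide_le_eq mult.commute)
qed

lemma I_minus_E_apply: "op_diff idop (op_scale \<gamma> Eop) f = (\<lambda>x. f x - \<gamma> * (\<integral>y. f y \<partial>M01))"
  by (simp add: op_diff_def idop_def op_scale_def Eop_def)

lemma scaled_I_minus_T_apply: "op_diff (op_scale \<gamma> idop) T u = (\<lambda>x. \<gamma> * u x - T u x)"
  by (simp add: op_diff_def idop_def op_scale_def)

locale Lp_operator =
  fixes p :: real and T :: "(real \<Rightarrow> complex) \<Rightarrow> real \<Rightarrow> complex"
  assumes one_le_p: "1 \<le> p" and bounded: "bounded_op p T"
begin

lemma p_pos: "0 < p"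
  using one_le_p by simp

lemma Lp_space_T: "f \<in> Lp_space p \<Longrightarrow> T f \<in> Lp_space p"
  using bounded by (simp add: bounded_op_def)

lemma T_cong:
  assumes "f \<in> Lp_space p" "g \<in> Lp_space p" "\<And>x. x \<in> {0..1} \<Longrightarrow> f x = g x"
  shows "AE x in M01. T f x = T g x"
proof -
  have "AE x in M01. f x = g x"
    using assms(3) by (intro AE_I2) simp
  then show ?thesis
    using bounded assms(1,2) by (simp add: bounded_op_def)
qed

lemma T_lincomb:
  "f \<in> Lp_space p \<Longrightarrow> g \<in> Lp_space p \<Longrightarrow> AE x in M01. T (\<lambda>y. a * f y + b * g y) x = a * T f x + b * T g x"
  using bounded by (simp add: bounded_op_def)

lemma T_scale: "f \<in> Lp_space p \<Longrightarrow> AE x in M01. T (\<lambda>y. a * f y) x = a * T f x"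
  using T_lincomb[of f f a 0] by simp

lemma T_diff: "f \<in> Lp_space p \<Longrightarrow> g \<in> Lp_space p \<Longrightarrow> AE x in M01. T (\<lambda>y. f y - g y) x = T f x - T g x"
  using T_lincomb[of f g 1 "-1"] by simp

lemma T_sum:
  assumes "finite I" "\<And>i. i \<in> I \<Longrightarrow> f i \<in> Lp_space p"
  shows "AE x in M01. T (\<lambda>y. \<Sum>i\<in>I. c i * f i y) x = (\<Sum>i\<in>I. c i * T (f i) x)"
  using assms
proof (induction I rule: finite_induct)
  case empty
  show ?case
    using T_scale[OF Lp_space_const[OF p_pos, of 0], of 0] by simp
next
  case (insert i I)
  have "AE x in M01. T (\<lambda>y. c i * f i y + 1 * (\<Sum>i\<in>I. c i * f i y)) x
      = c i * T (f i) x + 1 * T (\<lambda>y. \<Sum>i\<in>I. c i * f i y) x"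
    using insert p_pos by (intro T_lincomb Lp_space_sum Lp_space_scale) auto
  with insert show ?case
    by (auto elim: AE_mp)
qed

lemma T_bounded:
  obtains C where "0 \<le> C" "\<And>f. f \<in> Lp_space p \<Longrightarrow> lp_norm p (T f) \<le> C * lp_norm p f"
proof -
  obtain C where C: "\<And>f. f \<in> Lp_space p \<Longrightarrow> lp_norm p (T f) \<le> C * lp_norm p f"
    using bounded unfolding bounded_op_def by blast
  have "lp_norm p (T f) \<le> max C 0 * lp_norm p f" if "f \<in> Lp_space p" for f
    using C[OF that] lp_norm_nonneg[of p f] by (smt (verit) mult_right_mono)
  then show ?thesis
    using that[of "max C 0"] by simp
qed

lemma lp_norm_I_minus_T_le:
  assumes f: "f \<in> Lp_space p"
  shows "lp_norm p (\<lambda>x. f x - T f x) \<le> op_norm p (op_diff idop T) * lp_norm p f"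
proof -
  obtain C where C: "0 \<le> C" "\<And>f. f \<in> Lp_space p \<Longrightarrow> lp_norm p (T f) \<le> C * lp_norm p f"
    using T_bounded by blast
  have bound: "lp_norm p (\<lambda>x. f x - T f x) \<le> (1 + C) * lp_norm p f" if "f \<in> Lp_space p" for f
    using lp_norm_diff_le[OF that Lp_space_T[OF that] one_le_p] C(2)[OF that] by (simp add: algebra_simps)
  show ?thesis
  proof (cases "lp_norm p f = 0")
    case True
    then show ?thesis
      using bound[OF f] lp_norm_nonneg[of p "\<lambda>x. f x - T f x"] by simp
  next
    case False
    have "lp_norm p (op_diff idop T (\<lambda>x. c * f x)) = cmod c * lp_norm p (op_diff idop T f)" for c
    proof -
      have "AE x in M01. c * f x - T (\<lambda>y. c * f y) x = c * (f x - T f x)"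
        using T_scale[OF f, of c] by eventually_elim (simp add: algebra_simps)
      then have "lp_norm p (\<lambda>x. c * f x - T (\<lambda>y. c * f y) x) = lp_norm p (\<lambda>x. c * (f x - T f x))"
        using f p_pos Lp_space_T by (intro lp_norm_cong_AE)
          (auto intro!: Lp_space_measurable Lp_space_diff Lp_space_scale)
      then show ?thesis
        by (simp add: op_diff_def idop_def lp_norm_scale[OF p_pos])
    qed
    moreover have "bdd_above {lp_norm p (op_diff idop T f) |f. f \<in> Lp_space p \<and> lp_norm p f = 1}"
    proof (rule bdd_aboveI[where M="1 + C"])
      fix y
      assume "y \<in> {lp_norm p (op_diff idop T f) |f. f \<in> Lp_space p \<and> lp_norm p f = 1}"
      then obtain g where "g \<in> Lp_space p" "lp_norm p g = 1" "y = lp_norm p (\<lambda>x. g x - T g x)"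
        by (auto simp: op_diff_def idop_def)
      then show "y \<le> 1 + C"
        using bound[of g] by simp
    qed
    ultimately show ?thesis
      using lp_norm_le_op_norm[of p "op_diff idop T" f] f False lp_norm_nonneg[of p f] p_pos
      by (simp add: op_diff_def idop_def)
  qed
qed

lemma tendsto_lp_norm_shifted_T:
  assumes s: "\<And>i. s i \<in> Lp_space p" and u: "u \<in> Lp_space p"
    and lim: "(\<lambda>i. lp_norm p (\<lambda>x. s i x - u x)) \<longlonglongrightarrow> 0"
  shows "(\<lambda>i. lp_norm p (\<lambda>x. \<gamma> * s i x - T (s i) x)) \<longlonglongrightarrow> lp_norm p (\<lambda>x. \<gamma> * u x - T u x)"
proof (rule tendsto_lp_norm[OF _ _ one_le_p])
  obtain C where C: "0 \<le> C" "\<And>f. f \<in> Lp_space p \<Longrightarrow> lp_norm p (T f) \<le> C * lp_norm p f"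
    using T_bounded by blast
  have bound: "lp_norm p (\<lambda>x. (\<gamma> * s i x - T (s i) x) - (\<gamma> * u x - T u x))
      \<le> (cmod \<gamma> + C) * lp_norm p (\<lambda>x. s i x - u x)" for i
  proof -
    have su: "(\<lambda>x. s i x - u x) \<in> Lp_space p"
      using s u p_pos by (intro Lp_space_diff)
    have "AE x in M01. (\<gamma> * s i x - T (s i) x) - (\<gamma> * u x - T u x) = \<gamma> * (s i x - u x) + (-1) * T (\<lambda>y. s i y - u y) x"
      using T_diff[OF s u] by eventually_elim (simp add: algebra_simps)
    then have "lp_norm p (\<lambda>x. (\<gamma> * s i x - T (s i) x) - (\<gamma> * u x - T u x))
        = lp_norm p (\<lambda>x. \<gamma> * (s i x - u x) + (-1) * T (\<lambda>y. s i y - u y) x)"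
      using s u su p_pos Lp_space_T by (intro lp_norm_cong_AE)
        (auto intro!: Lp_space_measurable Lp_space_diff Lp_space_scale Lp_space_add)
    also have "\<dots> \<le> lp_norm p (\<lambda>x. \<gamma> * (s i x - u x)) + cmod (-1) * lp_norm p (T (\<lambda>y. s i y - u y))"
      using su p_pos by (intro lp_norm_add_scaled_le Lp_space_scale Lp_space_T one_le_p)
    also have "\<dots> \<le> (cmod \<gamma> + C) * lp_norm p (\<lambda>x. s i x - u x)"
    proof -
      have "lp_norm p (\<lambda>x. \<gamma> * (s i x - u x)) = cmod \<gamma> * lp_norm p (\<lambda>x. s i x - u x)"
        by (rule lp_norm_scale[OF p_pos])
      then show ?thesis
        using C(2)[OF su] by (simp add: distrib_right)
    qed
    finally show ?thesis .
  qed
  show "(\<lambda>i. lp_norm p (\<lambda>x. (\<gamma> * s i x - T (s i) x) - (\<gamma> * u x - T u x))) \<longlonglongrightarrow> 0"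
  proof (rule Lim_null_comparison)
    show "\<forall>\<^sub>F i in sequentially. norm (lp_norm p (\<lambda>x. (\<gamma> * s i x - T (s i) x) - (\<gamma> * u x - T u x)))
        \<le> (cmod \<gamma> + C) * lp_norm p (\<lambda>x. s i x - u x)"
      using bound lp_norm_nonneg by (intro always_eventually allI) simp
    show "(\<lambda>i. (cmod \<gamma> + C) * lp_norm p (\<lambda>x. s i x - u x)) \<longlonglongrightarrow> 0"
      using tendsto_mult_right_zero[OF lim] by simp
  qed
qed (use s u p_pos Lp_space_T in \<open>auto intro!: Lp_space_diff Lp_space_scale\<close>)

end

section \<open>Narrow operators\<close>

lemma Lp_space_sign:
  assumes "is_sign_on A g" "0 < p"
  shows "g \<in> Lp_space p"
proof (rule Lp_spaceI_bounded[where B=1])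
  show "cmod (g x) \<le> 1" if "x \<in> {0..1}" for x
  proof -
    have "g x = -1 \<or> g x = 0 \<or> g x = 1"
      using assms(1) that unfolding is_sign_on_def by auto
    then show ?thesis
      by auto
  qed
qed (use assms in \<open>auto simp: is_sign_on_def\<close>)

lemma mean_zero_sign_positive_part:
  assumes A: "A \<in> sets M01" and g: "is_sign_on A g" "mean_zero g"
  defines "H \<equiv> {x\<in>{0..1}. g x = 1}"
  shows "H \<in> sets M01" "H \<subseteq> A" "measure M01 H = measure M01 A / 2"
    and "\<And>x. x \<in> {0..1} \<Longrightarrow> indicator H x = (indicator A x + g x) / 2"
proof -
  have gm: "g \<in> borel_measurable M01"
    and gv: "\<And>x. x \<in> {0..1} \<Longrightarrow> g x \<in> {-1, 0, 1} \<and> (g x)\<^sup>2 = indicator A x"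
    using g(1) unfolding is_sign_on_def by auto
  show H: "H \<in> sets M01"
    using measurable_sets[OF gm, of "{1}"] unfolding H_def by (simp add: vimage_def Int_def conj_commute)
  show ind: "indicator H x = (indicator A x + g x) / 2" if "x \<in> {0..1}" for x
  proof -
    have "g x = -1 \<or> g x = 0 \<or> g x = 1" and sq: "(g x)\<^sup>2 = indicator A x"
      using gv[OF that] by auto
    then consider "g x = -1" | "g x = 0" | "g x = 1"
      by blast
    then show ?thesis
      using sq that unfolding H_def by cases (auto simp: indicator_def split: if_splits)
  qed
  show "H \<subseteq> A"
  proof
    fix x
    assume "x \<in> H"
    then have "x \<in> {0..1}" "g x = 1"
      unfolding H_def by auto
    then show "x \<in> A"
      using ind[of x] by (auto simp: indicator_def H_def split: if_splits)
  qed
  have "of_real (measure M01 H) = (\<integral>x. (indicator A x + g x) / 2 \<partial>M01)"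
    using integral_indicator_M01[OF H] ind by (metis (no_types, lifting) Bochner_Integration.integral_cong space_M01)
  also have "\<dots> = of_real (measure M01 A) / 2"
    using g(2) integral_indicator_M01[OF A] Lp_space_integrable[OF Lp_space_indicator[OF A, of 1]]
      Lp_space_integrable[OF Lp_space_sign[OF g(1), of 1]]
    by (simp add: mean_zero_def)
  finally show "measure M01 H = measure M01 A / 2"
    by (metis of_real_divide of_real_eq_iff of_real_numeral)
qed

locale narrow_operator = Lp_operator +
  assumes narrow: "narrow p T"
begin

lemma narrow_halving:
  assumes A: "A \<in> sets M01" and \<delta>: "0 < \<delta>"
  obtains H where "H \<in> sets M01" "H \<subseteq> A" "measure M01 H = measure M01 A / 2"
    "lp_norm p (\<lambda>x. T (indicator H) x - T (indicator A) x / 2) \<le> \<delta>"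
proof (cases "measure M01 A = 0")
  case True
  obtain C where C: "0 \<le> C" "\<And>f. f \<in> Lp_space p \<Longrightarrow> lp_norm p (T f) \<le> C * lp_norm p f"
    using T_bounded by blast
  have null: "lp_norm p (T (indicator S)) = 0" if "S \<in> sets M01" "measure M01 S = 0" for S
    using C(2)[OF Lp_space_indicator[OF that(1) p_pos]] that p_pos lp_norm_nonneg[of p "T (indicator S)"]
    by (simp add: lp_norm_eq_lp_integral lp_integral_indicator)
  have "lp_norm p (\<lambda>x. T (indicator {}) x - T (indicator A) x / 2)
      \<le> lp_norm p (T (indicator {})) + lp_norm p (\<lambda>x. T (indicator A) x / 2)"
    using A p_pos by (intro lp_norm_diff_le one_le_p Lp_space_T Lp_space_divide Lp_space_indicator) auto
  also have "\<dots> = 0"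
    using null[of "{}"] null[OF A True] by (simp add: lp_norm_divide[OF p_pos])
  finally show ?thesis
    using that[of "{}"] \<delta> True by simp
next
  case False
  then have "0 < measure M01 A"
    using measure_nonneg[of M01 A] by linarith
  then obtain g where g: "is_sign_on A g" "mean_zero g" "lp_norm p (T g) < 2 * \<delta>"
    using narrow A \<delta> unfolding narrow_def by (metis mult_pos_pos zero_less_numeral)
  define H where "H = {x\<in>{0..1}. g x = 1}"
  note H = mean_zero_sign_positive_part[OF A g(1,2), folded H_def]
  have gL: "g \<in> Lp_space p"
    using g(1) p_pos by (rule Lp_space_sign)
  have "indicator H x = (1/2) * indicator A x + (1/2) * g x" if "x \<in> {0..1}" for x
    unfolding H(4)[OF that] by (simp add: add_divide_distrib)
  then have "AE x in M01. T (indicator H) x = T (\<lambda>y. (1/2) * indicator A y + (1/2) * g y) x"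
    using H(1) A gL p_pos by (intro T_cong Lp_space_indicator Lp_space_lincomb) auto
  moreover have "AE x in M01. T (\<lambda>y. (1/2) * indicator A y + (1/2) * g y) x = (1/2) * T (indicator A) x + (1/2) * T g x"
    using A gL p_pos by (intro T_lincomb Lp_space_indicator)
  ultimately have "AE x in M01. T (indicator H) x - T (indicator A) x / 2 = T g x / 2"
    by eventually_elim simp
  then have "lp_norm p (\<lambda>x. T (indicator H) x - T (indicator A) x / 2) = lp_norm p (\<lambda>x. T g x / 2)"
    using Lp_space_T[OF Lp_space_indicator[OF H(1) p_pos]] Lp_space_T[OF Lp_space_indicator[OF A p_pos]]
      Lp_space_T[OF gL] p_pos
    by (intro lp_norm_cong_AE Lp_space_measurable Lp_space_diff Lp_space_divide)
  also have "\<dots> < \<delta>"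
    using g(3) by (simp add: lp_norm_divide[OF p_pos])
  finally show ?thesis
    using that H(1-3) by simp
qed

definition balanced_partition :: "real set \<Rightarrow> nat \<Rightarrow> (nat \<Rightarrow> real set) \<Rightarrow> real \<Rightarrow> bool" where
  "balanced_partition A K Q \<delta> \<longleftrightarrow> equipartition A K Q \<and>
     (\<forall>l<K. lp_norm p (\<lambda>x. T (indicator (Q l)) x - T (indicator A) x / of_nat K) \<le> \<delta>)"

lemma narrow_halving_family:
  assumes Q: "\<And>l. l < K \<Longrightarrow> Q l \<in> sets M01" and \<delta>: "0 < \<delta>"
  obtains H where "\<forall>l<K. H l \<in> sets M01 \<and> H l \<subseteq> Q l \<and>
      measure M01 (H l) = measure M01 (Q l) / 2 \<and>
      lp_norm p (\<lambda>x. T (indicator (H l)) x - T (indicator (Q l)) x / 2) \<le> \<delta>"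
proof -
  define halves where "halves l H \<longleftrightarrow> H \<in> sets M01 \<and> H \<subseteq> Q l \<and>
      measure M01 H = measure M01 (Q l) / 2 \<and>
      lp_norm p (\<lambda>x. T (indicator H) x - T (indicator (Q l)) x / 2) \<le> \<delta>" for l H
  have "\<forall>l\<in>{..<K}. \<exists>H. halves l H"
  proof
    fix l
    assume "l \<in> {..<K}"
    then have "Q l \<in> sets M01"
      using Q by simp
    then obtain H where "H \<in> sets M01" "H \<subseteq> Q l" "measure M01 H = measure M01 (Q l) / 2"
      "lp_norm p (\<lambda>x. T (indicator H) x - T (indicator (Q l)) x / 2) \<le> \<delta>"
      by (rule narrow_halving[OF _ \<delta>])
    then show "\<exists>H. halves l H"
      unfolding halves_def by blast
  qed
  then obtain H where "\<forall>l\<in>{..<K}. halves l (H l)"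
    using bchoice by blast
  then show ?thesis
    using that unfolding halves_def by blast
qed

lemma balanced_partition_double:
  assumes A: "A \<in> sets M01" and Q: "balanced_partition A K Q \<delta>" and \<delta>: "0 < \<delta>"
  obtains Q' where "balanced_partition A (2 * K) Q' \<delta>"
proof -
  have QE: "equipartition A K Q"
    and Q_err: "\<And>l. l < K \<Longrightarrow> lp_norm p (\<lambda>x. T (indicator (Q l)) x - T (indicator A) x / of_nat K) \<le> \<delta>"
    using Q unfolding balanced_partition_def by auto
  have Qs: "\<And>l. l < K \<Longrightarrow> Q l \<in> sets M01"
    using QE unfolding equipartition_def by auto
  obtain H where "\<forall>l<K. H l \<in> sets M01 \<and> H l \<subseteq> Q l \<and>
      measure M01 (H l) = measure M01 (Q l) / 2 \<and>
      lp_norm p (\<lambda>x. T (indicator (H l)) x - T (indicator (Q l)) x / 2) \<le> \<delta> / 2"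
    by (rule narrow_halving_family[OF Qs half_gt_zero[OF \<delta>]])
  then have H: "\<And>l. l < K \<Longrightarrow> H l \<in> sets M01 \<and> H l \<subseteq> Q l \<and>
      measure M01 (H l) = measure M01 (Q l) / 2 \<and>
      lp_norm p (\<lambda>x. T (indicator (H l)) x - T (indicator (Q l)) x / 2) \<le> \<delta> / 2"
    by blast
  define Q' where "Q' m = (if even m then H (m div 2) else Q (m div 2) - H (m div 2))" for m
  have QE': "equipartition A (2 * K) Q'"
    unfolding Q'_def using H by (intro equipartition_double[OF QE]) auto
  moreover have "lp_norm p (\<lambda>x. T (indicator (Q' m)) x - T (indicator A) x / of_nat (2 * K)) \<le> \<delta>"
    if "m < 2 * K" for m
  proof -
    define l where "l = m div 2"
    have l: "l < K"
      using that unfolding l_def by auto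
    have ind: "indicator (Q l) \<in> Lp_space p" "indicator (H l) \<in> Lp_space p" "indicator A \<in> Lp_space p"
      "indicator (Q' m) \<in> Lp_space p"
      using Qs[OF l] H[OF l] A QE' that p_pos by (auto intro: Lp_space_indicator simp: equipartition_def)
    define X where "X x = T (indicator (H l)) x - T (indicator (Q l)) x / 2" for x
    define Y where "Y x = T (indicator (Q l)) x - T (indicator A) x / of_nat K" for x
    define s :: complex where "s = (if even m then 1 else -1)"
    have XY: "X \<in> Lp_space p" "Y \<in> Lp_space p"
      unfolding X_def Y_def using ind p_pos by (auto intro!: Lp_space_diff Lp_space_divide Lp_space_T)
    \<comment> \<open>Halving the piece \<open>Q l\<close> costs \<open>X\<close>; the error \<open>Y\<close> of \<open>Q l\<close> itself is shared by both halves.\<close>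
    have "AE x in M01. T (indicator (Q' m)) x - T (indicator A) x / of_nat (2 * K) = s * X x + (1/2) * Y x"
    proof (cases "even m")
      case True
      then show ?thesis
        unfolding Q'_def X_def Y_def s_def l_def by (intro AE_I2) (simp add: field_simps)
    next
      case False
      have "indicator (Q l - H l) = (\<lambda>y. indicator (Q l) y - indicator (H l) y :: complex)"
        using H[OF l] by (auto simp: indicator_def fun_eq_iff)
      then have "AE x in M01. T (indicator (Q l - H l)) x = T (indicator (Q l)) x - T (indicator (H l)) x"
        using T_diff[OF ind(1,2)] by simp
      then show ?thesis
        unfolding Q'_def X_def Y_def s_def l_def
      proof eventually_elim
        case (elim x)
        then show ?case
          using False by (simp add: field_simps) (metis distrib_left)
      qed
    qed
    then have "lp_norm p (\<lambda>x. T (indicator (Q' m)) x - T (indicator A) x / of_nat (2 * K))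
        = lp_norm p (\<lambda>x. s * X x + (1/2) * Y x)"
      using XY ind p_pos
      by (intro lp_norm_cong_AE) (auto intro!: Lp_space_measurable Lp_space_diff
          Lp_space_divide Lp_space_T Lp_space_add Lp_space_scale)
    also have "\<dots> \<le> lp_norm p (\<lambda>x. s * X x) + cmod (1/2) * lp_norm p Y"
      using XY p_pos by (intro lp_norm_add_scaled_le Lp_space_scale one_le_p)
    also have "\<dots> \<le> \<delta> / 2 + (1/2) * \<delta>"
      using H[OF l] Q_err[OF l] unfolding X_def Y_def s_def
      by (intro add_mono) (auto simp: lp_norm_scale[OF p_pos])
    finally show ?thesis
      by simp
  qed
  ultimately show ?thesis
    using that unfolding balanced_partition_def by blast
qed

lemma balanced_partition_exists:
  assumes A: "A \<in> sets M01" and \<delta>: "0 < \<delta>"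
  obtains Q where "balanced_partition A (2 ^ k) Q \<delta>"
proof -
  have "\<exists>Q. balanced_partition A (2 ^ k) Q \<delta>"
  proof (induction k)
    case 0
    have "balanced_partition A 1 (\<lambda>_. A) \<delta>"
      using equipartition_trivial[OF A] \<delta> lp_norm_const[OF p_pos, of 0]
      unfolding balanced_partition_def by simp
    then show ?case
      by auto
  next
    case (Suc k)
    then obtain Q where "balanced_partition A (2 ^ k) Q \<delta>"
      by blast
    from balanced_partition_double[OF A this \<delta>] show ?case
      by (metis power_Suc)
  qed
  then show ?thesis
    using that by blast
qed

lemma T_simple_function:
  assumes v: "simple_function M01 v"
  shows "AE x in M01. T v x = (\<Sum>a\<in>v ` {0..1}. a * T (indicator (level_set v a)) x)"
proof -
  have level_sum: "(\<lambda>y. \<Sum>a\<in>v ` {0..1}. a * indicator (level_set v a) y) \<in> Lp_space p"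
    using finite_range_simple_function[OF v] Lp_space_indicator[OF level_set_in_sets[OF v] p_pos] p_pos
    by (intro Lp_space_sum Lp_space_scale)
  have "v x = (\<Sum>a\<in>v ` {0..1}. a * indicator (level_set v a) x)" if "x \<in> {0..1}" for x
    using sum_level_sets[OF v that, where h="\<lambda>a. a"] by simp
  then have "AE x in M01. T v x = T (\<lambda>y. \<Sum>a\<in>v ` {0..1}. a * indicator (level_set v a) y) x"
    by (rule T_cong[OF Lp_space_simple_function[OF v p_pos] level_sum])
  moreover have "AE x in M01. T (\<lambda>y. \<Sum>a\<in>v ` {0..1}. a * indicator (level_set v a) y) x
      = (\<Sum>a\<in>v ` {0..1}. a * T (indicator (level_set v a)) x)"
    by (rule T_sum[where f="\<lambda>a. indicator (level_set v a)" and c="\<lambda>a. a",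
          OF finite_range_simple_function[OF v] Lp_space_indicator[OF level_set_in_sets[OF v] p_pos]])
  ultimately show ?thesis
    by eventually_elim simp
qed

lemma balanced_partitions_of_level_sets:
  assumes v: "simple_function M01 v" and \<delta>: "0 < \<delta>"
  obtains Q where "\<forall>a\<in>v ` {0..1}. balanced_partition (level_set v a) (2 ^ k) (Q a) \<delta>"
proof -
  have "\<forall>a\<in>v ` {0..1}. \<exists>Q. balanced_partition (level_set v a) (2 ^ k) Q \<delta>"
  proof
    fix a
    obtain Q where "balanced_partition (level_set v a) (2 ^ k) Q \<delta>"
      by (rule balanced_partition_exists[OF level_set_in_sets[OF v] \<delta>])
    then show "\<exists>Q. balanced_partition (level_set v a) (2 ^ k) Q \<delta>"
      by blast
  qed
  then have "\<exists>Q. \<forall>a\<in>v ` {0..1}. balanced_partition (level_set v a) (2 ^ k) (Q a) \<delta>"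
    by (rule bchoice)
  then show ?thesis
    using that by blast
qed

lemma T_tensor_error:
  fixes K :: nat
  assumes v: "simple_function M01 v" and K: "0 < K"
    and Q: "\<forall>a\<in>v ` {0..1}. balanced_partition (level_set v a) K (Q a) \<delta>"
  shows "lp_norm p (\<lambda>x. T (\<lambda>y. \<Sum>i\<in>v ` {0..1} \<times> {..<K}. (fst i * d (snd i)) * indicator (Q (fst i) (snd i)) y) x
      - weighted_mean {..<K} (\<lambda>_. 1 / K) d * T v x) \<le> \<delta> * (\<Sum>a\<in>v ` {0..1}. \<Sum>l<K. cmod (a * d l))"
proof -
  have QE: "\<forall>a\<in>v ` {0..1}. equipartition (level_set v a) K (Q a)"
    and Q_err: "\<And>a l. a \<in> v ` {0..1} \<Longrightarrow> l < K \<Longrightarrow>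
      lp_norm p (\<lambda>x. T (indicator (Q a l)) x - T (indicator (level_set v a)) x / of_nat K) \<le> \<delta>"
    using Q unfolding balanced_partition_def by auto
  define I where "I = v ` {0..1} \<times> {..<K}"
  define m where "m = weighted_mean {..<K} (\<lambda>_. 1 / K) d"
  define w where "w = (\<lambda>y. \<Sum>i\<in>I. (fst i * d (snd i)) * indicator (Q (fst i) (snd i)) y)"
  note tensor = tensor_step_function[OF v K QE, folded I_def]
  have sum_I: "(\<Sum>i\<in>I. h i) = (\<Sum>a\<in>v ` {0..1}. \<Sum>l<K. h (a, l))" for h :: "complex \<times> nat \<Rightarrow> 'z::comm_monoid_add"
    unfolding I_def by (simp add: sum.cartesian_product)
  have ind: "indicator (Q (fst i) (snd i)) \<in> Lp_space p" if "i \<in> I" for i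
    using tensor(3)[OF that] p_pos by (rule Lp_space_indicator)
  have wL: "w \<in> Lp_space p"
    unfolding w_def using tensor(1) ind p_pos by (intro Lp_space_sum Lp_space_scale) auto
  define D where "D i x = T (indicator (Q (fst i) (snd i))) x - T (indicator (level_set v (fst i))) x / of_nat K" for i x
  have DL: "D i \<in> Lp_space p" if "i \<in> I" for i
    unfolding D_def using ind[OF that] Lp_space_indicator[OF level_set_in_sets[OF v] p_pos] p_pos
    by (intro Lp_space_diff Lp_space_divide Lp_space_T)
  have mean_part: "m * (\<Sum>a\<in>v ` {0..1}. a * Y a) = (\<Sum>i\<in>I. (fst i * d (snd i)) * (Y (fst i) / of_nat K))" for Y
  proof -
    have "m * (\<Sum>a\<in>v ` {0..1}. a * Y a) = (\<Sum>l<K. \<Sum>a\<in>v ` {0..1}. (of_real (1 / K) * d l) * (a * Y a))"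
      unfolding m_def weighted_mean_def by (rule sum_product)
    also have "\<dots> = (\<Sum>a\<in>v ` {0..1}. \<Sum>l<K. (a * d l) * (Y a / of_nat K))"
      by (subst sum.swap) (simp add: algebra_simps)
    finally show ?thesis
      unfolding sum_I by simp
  qed
  have "AE x in M01. T w x = (\<Sum>i\<in>I. (fst i * d (snd i)) * T (indicator (Q (fst i) (snd i))) x)"
    unfolding w_def
    by (rule T_sum[where f="\<lambda>i. indicator (Q (fst i) (snd i))" and c="\<lambda>i. fst i * d (snd i)", OF tensor(1) ind])
  then have "AE x in M01. T w x - m * T v x = (\<Sum>i\<in>I. (fst i * d (snd i)) * D i x)"
    using T_simple_function[OF v]
  proof eventually_elim
    case (elim x)
    then show ?case
      using mean_part[of "\<lambda>a. T (indicator (level_set v a)) x"]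
      by (simp add: D_def right_diff_distrib sum_subtractf)
  qed
  then have "lp_norm p (\<lambda>x. T w x - m * T v x) = lp_norm p (\<lambda>x. \<Sum>i\<in>I. (fst i * d (snd i)) * D i x)"
    using wL Lp_space_simple_function[OF v p_pos] tensor(1) DL p_pos
    by (intro lp_norm_cong_AE) (auto intro!: Lp_space_measurable Lp_space_diff Lp_space_scale
        Lp_space_T Lp_space_sum)
  also have "\<dots> \<le> (\<Sum>i\<in>I. lp_norm p (\<lambda>x. (fst i * d (snd i)) * D i x))"
    using tensor(1) DL p_pos by (intro lp_norm_sum_le Lp_space_scale one_le_p) auto
  also have "\<dots> \<le> (\<Sum>i\<in>I. cmod (fst i * d (snd i)) * \<delta>)"
    using Q_err unfolding D_def I_def
    by (intro sum_mono) (auto simp: lp_norm_scale[OF p_pos] mem_Times_iff intro!: mult_left_mono)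
  also have "\<dots> = \<delta> * (\<Sum>a\<in>v ` {0..1}. \<Sum>l<K. cmod (a * d l))"
    unfolding sum_I by (simp add: sum_distrib_left mult.commute)
  finally show ?thesis
    unfolding m_def w_def I_def .
qed

lemma transplant:
  fixes K :: nat
  assumes v: "simple_function M01 v" and \<delta>: "0 < \<delta>" and K: "K = 2 ^ k"
  obtains w where "w \<in> Lp_space p"
    "\<And>c. lp_norm p (\<lambda>x. w x - c * v x) = lp_norm p v * weighted_lp_norm p {..<K} (\<lambda>_. 1 / K) (\<lambda>l. d l - c)"
    "lp_norm p (\<lambda>x. T w x - weighted_mean {..<K} (\<lambda>_. 1 / K) d * T v x)
       \<le> \<delta> * (\<Sum>a\<in>v ` {0..1}. \<Sum>l<K. cmod (a * d l))"
proof -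
  obtain Q where Q: "\<forall>a\<in>v ` {0..1}. balanced_partition (level_set v a) K (Q a) \<delta>"
    using balanced_partitions_of_level_sets[OF v \<delta>] unfolding K by blast
  have K0: "0 < K"
    using K by simp
  have QE: "\<forall>a\<in>v ` {0..1}. equipartition (level_set v a) K (Q a)"
    using Q unfolding balanced_partition_def by auto
  define I where "I = v ` {0..1} \<times> {..<K}"
  define w where "w = (\<lambda>x. \<Sum>i\<in>I. (fst i * d (snd i)) * indicator (Q (fst i) (snd i)) x)"
  note tensor = tensor_step_function[OF v K0 QE, folded I_def]
  have "w \<in> Lp_space p"
    unfolding w_def using tensor(1,3) p_pos by (intro Lp_space_sum Lp_space_scale Lp_space_indicator) auto
  moreover have "lp_norm p (\<lambda>x. w x - c * v x) = lp_norm p v * weighted_lp_norm p {..<K} (\<lambda>_. 1 / K) (\<lambda>l. d l - c)"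
    for c
  proof -
    have "lp_norm p (\<lambda>x. w x - c * v x)
        = lp_norm p (\<lambda>x. \<Sum>i\<in>I. (fst i * (d (snd i) - c)) * indicator (Q (fst i) (snd i)) x)"
      by (intro lp_norm_cong) (simp add: w_def tensor(4) sum_distrib_left sum_subtractf[symmetric] algebra_simps)
    then show ?thesis
      using tensor(5) by simp
  qed
  moreover have "lp_norm p (\<lambda>x. T w x - weighted_mean {..<K} (\<lambda>_. 1 / K) d * T v x)
       \<le> \<delta> * (\<Sum>a\<in>v ` {0..1}. \<Sum>l<K. cmod (a * d l))"
    using T_tensor_error[OF v K0 Q, of d] unfolding w_def I_def .
  ultimately show ?thesis
    using that by blast
qed

lemma uniform_weights_inequality:
  fixes K :: nat
  assumes v: "simple_function M01 v" and K: "K = 2 ^ k"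
  shows "lp_norm p v * weighted_lp_norm p {..<K} (\<lambda>_. 1 / K) (\<lambda>l. d l - \<gamma> * weighted_mean {..<K} (\<lambda>_. 1 / K) d)
    \<le> (op_norm p (op_diff idop T) * lp_norm p v + lp_norm p (\<lambda>x. \<gamma> * v x - T v x))
       * weighted_lp_norm p {..<K} (\<lambda>_. 1 / K) d"
proof -
  define m where "m = weighted_mean {..<K} (\<lambda>_. 1 / K) d"
  define W where "W e = weighted_lp_norm p {..<K} (\<lambda>_. 1 / K) e" for e
  define B where "B = (\<Sum>a\<in>v ` {0..1}. \<Sum>l<K. cmod (a * d l))"
  have B: "0 \<le> B"
    unfolding B_def by (intro sum_nonneg) auto
  have vL: "v \<in> Lp_space p"
    using v p_pos by (rule Lp_space_simple_function)
  have "lp_norm p v * W (\<lambda>l. d l - \<gamma> * m)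
      \<le> op_norm p (op_diff idop T) * (lp_norm p v * W d) + cmod m * lp_norm p (\<lambda>x. \<gamma> * v x - T v x)"
  proof (rule field_le_epsilon)
    fix \<epsilon> :: real
    assume \<epsilon>: "0 < \<epsilon>"
    have \<delta>: "0 < \<epsilon> / (B + 1)"
      using \<epsilon> B by simp
    obtain w where wL: "w \<in> Lp_space p"
      and w_norm: "\<And>c. lp_norm p (\<lambda>x. w x - c * v x) = lp_norm p v * W (\<lambda>l. d l - c)"
      and w_T: "lp_norm p (\<lambda>x. T w x - m * T v x) \<le> \<epsilon> / (B + 1) * B"
      using transplant[OF v \<delta> K, of d, folded W_def m_def B_def] by blast
    have TL: "T w \<in> Lp_space p" "T v \<in> Lp_space p"
      using wL vL by (auto intro: Lp_space_T)
    have L1: "(\<lambda>x. w x - T w x) \<in> Lp_space p" and L2: "(\<lambda>x. T w x - m * T v x) \<in> Lp_space p"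
      and L3: "(\<lambda>x. T v x - \<gamma> * v x) \<in> Lp_space p"
      using wL vL TL p_pos by (auto intro!: Lp_space_diff Lp_space_scale)
    have "(\<lambda>x. w x - (\<gamma> * m) * v x) = (\<lambda>x. (w x - T w x) + ((T w x - m * T v x) + m * (T v x - \<gamma> * v x)))"
      by (rule ext) (simp add: algebra_simps)
    then have "lp_norm p v * W (\<lambda>l. d l - \<gamma> * m)
        = lp_norm p (\<lambda>x. (w x - T w x) + ((T w x - m * T v x) + m * (T v x - \<gamma> * v x)))"
      using w_norm[of "\<gamma> * m"] by simp
    also have "\<dots> \<le> lp_norm p (\<lambda>x. w x - T w x) + lp_norm p (\<lambda>x. (T w x - m * T v x) + m * (T v x - \<gamma> * v x))"
      using L1 L2 L3 p_pos by (intro lp_norm_triangle Lp_space_add Lp_space_scale one_le_p)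
    also have "\<dots> \<le> op_norm p (op_diff idop T) * (lp_norm p v * W d)
        + (\<epsilon> / (B + 1) * B + cmod m * lp_norm p (\<lambda>x. \<gamma> * v x - T v x))"
    proof (intro add_mono)
      show "lp_norm p (\<lambda>x. w x - T w x) \<le> op_norm p (op_diff idop T) * (lp_norm p v * W d)"
        using lp_norm_I_minus_T_le[OF wL] w_norm[of 0] by simp
      show "lp_norm p (\<lambda>x. (T w x - m * T v x) + m * (T v x - \<gamma> * v x))
          \<le> \<epsilon> / (B + 1) * B + cmod m * lp_norm p (\<lambda>x. \<gamma> * v x - T v x)"
        using lp_norm_add_scaled_le[OF L2 L3 one_le_p, of m] w_T lp_norm_minus_commute[of p "T v" "\<lambda>x. \<gamma> * v x"]
        by simp
    qed
    also have "\<epsilon> / (B + 1) * B \<le> \<epsilon>"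
      using \<epsilon> B by (simp add: field_simps)
    finally show "lp_norm p v * W (\<lambda>l. d l - \<gamma> * m)
        \<le> op_norm p (op_diff idop T) * (lp_norm p v * W d) + cmod m * lp_norm p (\<lambda>x. \<gamma> * v x - T v x) + \<epsilon>"
      by simp
  qed
  moreover have "cmod m \<le> W d"
    unfolding m_def W_def using K by (intro norm_weighted_mean_le one_le_p) auto
  then have "cmod m * lp_norm p (\<lambda>x. \<gamma> * v x - T v x) \<le> W d * lp_norm p (\<lambda>x. \<gamma> * v x - T v x)"
    by (intro mult_right_mono lp_norm_nonneg)
  ultimately show ?thesis
    unfolding m_def W_def by (simp add: algebra_simps)
qed

lemma dyadic_weights_inequality:
  fixes N :: "complex \<Rightarrow> nat"
  assumes v: "simple_function M01 v" and R: "finite R" and N: "(\<Sum>a\<in>R. N a) = 2 ^ k"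
  shows "lp_norm p v * weighted_lp_norm p R (\<lambda>a. N a / 2 ^ k)
      (\<lambda>a. a - \<gamma> * weighted_mean R (\<lambda>a. N a / 2 ^ k) (\<lambda>a. a))
    \<le> (op_norm p (op_diff idop T) * lp_norm p v + lp_norm p (\<lambda>x. \<gamma> * v x - T v x))
       * weighted_lp_norm p R (\<lambda>a. N a / 2 ^ k) (\<lambda>a. a)"
proof -
  define K :: nat where "K = 2 ^ k"
  obtain \<sigma> where "\<And>l. l < (\<Sum>a\<in>R. N a) \<Longrightarrow> \<sigma> l \<in> R"
    "\<And>a. a \<in> R \<Longrightarrow> card {l. l < (\<Sum>a\<in>R. N a) \<and> \<sigma> l = a} = N a"
    using enumeration_with_multiplicities[OF R, where N=N] by blast
  note \<sigma> = this[unfolded N, folded K_def]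
  note enum = weighted_enumeration[OF R \<sigma>]
  define M where "M = weighted_mean R (\<lambda>a. N a / K) (\<lambda>a. a)"
  have mean: "weighted_mean {..<K} (\<lambda>_. 1 / K) \<sigma> = M"
    unfolding M_def using enum(2)[of "\<lambda>a. a"] by simp
  have "weighted_lp_norm p {..<K} (\<lambda>_. 1 / K) \<sigma> = weighted_lp_norm p R (\<lambda>a. N a / K) (\<lambda>a. a)"
    using enum(1)[of p "\<lambda>a. a"] by simp
  moreover have "weighted_lp_norm p {..<K} (\<lambda>_. 1 / K) (\<lambda>l. \<sigma> l - \<gamma> * M)
      = weighted_lp_norm p R (\<lambda>a. N a / K) (\<lambda>a. a - \<gamma> * M)"
    using enum(1)[of p "\<lambda>a. a - \<gamma> * M"] by simp
  ultimately show ?thesis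
    using uniform_weights_inequality[OF v K_def, of \<sigma> \<gamma>] unfolding mean
    by (simp add: M_def K_def)
qed

lemma weighted_inequality:
  assumes v: "simple_function M01 v" and R: "finite R"
    and r: "\<And>a. a \<in> R \<Longrightarrow> 0 \<le> r a" "(\<Sum>a\<in>R. r a) = 1"
  shows "lp_norm p v * weighted_lp_norm p R r (\<lambda>a. a - \<gamma> * weighted_mean R r (\<lambda>a. a))
    \<le> (op_norm p (op_diff idop T) * lp_norm p v + lp_norm p (\<lambda>x. \<gamma> * v x - T v x))
       * weighted_lp_norm p R r (\<lambda>a. a)"
proof -
  obtain a0 where a0: "a0 \<in> R"
    using r(2) by fastforce
  obtain N :: "nat \<Rightarrow> complex \<Rightarrow> nat" where N: "\<And>k. (\<Sum>a\<in>R. N k a) = 2 ^ k" "\<And>a. a \<in> R \<Longrightarrow> (\<lambda>k. N k a / 2 ^ k) \<longlonglongrightarrow> r a"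
    using dyadic_approximation[OF R a0 r] by blast
  define q where "q k a = real (N k a) / 2 ^ k" for k a
  have q: "\<And>a. a \<in> R \<Longrightarrow> (\<lambda>k. q k a) \<longlonglongrightarrow> r a" and q0: "\<And>k a. 0 \<le> q k a"
    using N(2) unfolding q_def by auto
  have mean: "(\<lambda>k. weighted_mean R (q k) (\<lambda>a. a)) \<longlonglongrightarrow> weighted_mean R r (\<lambda>a. a)"
    unfolding weighted_mean_def by (intro tendsto_intros q)
  have "(\<lambda>k. lp_norm p v * weighted_lp_norm p R (q k) (\<lambda>a. a - \<gamma> * weighted_mean R (q k) (\<lambda>a. a)))
      \<longlonglongrightarrow> lp_norm p v * weighted_lp_norm p R r (\<lambda>a. a - \<gamma> * weighted_mean R r (\<lambda>a. a))"
    unfolding weighted_lp_norm_def using p_pos q0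
    by (intro tendsto_mult tendsto_const tendsto_powr_nonneg tendsto_sum tendsto_norm tendsto_diff q mean)
      (auto intro!: sum_nonneg)
  moreover have "(\<lambda>k. (op_norm p (op_diff idop T) * lp_norm p v + lp_norm p (\<lambda>x. \<gamma> * v x - T v x))
      * weighted_lp_norm p R (q k) (\<lambda>a. a))
      \<longlonglongrightarrow> (op_norm p (op_diff idop T) * lp_norm p v + lp_norm p (\<lambda>x. \<gamma> * v x - T v x))
      * weighted_lp_norm p R r (\<lambda>a. a)"
    unfolding weighted_lp_norm_def using p_pos q0
    by (intro tendsto_mult tendsto_const tendsto_powr_nonneg tendsto_sum q) (auto intro!: sum_nonneg)
  ultimately show ?thesis
    using dyadic_weights_inequality[OF v R N(1)] unfolding q_def
    by (intro LIMSEQ_le) auto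
qed

lemma simple_function_inequality:
  fixes F :: "real \<Rightarrow> complex"
  assumes v: "simple_function M01 v" and F: "simple_function M01 F"
  shows "lp_norm p v * lp_norm p (\<lambda>x. F x - \<gamma> * (\<integral>y. F y \<partial>M01))
    \<le> (op_norm p (op_diff idop T) * lp_norm p v + lp_norm p (\<lambda>x. \<gamma> * v x - T v x)) * lp_norm p F"
proof -
  define r where "r a = measure M01 (level_set F a)" for a
  have "lp_norm p (\<lambda>x. F x - \<gamma> * (\<integral>y. F y \<partial>M01))
      = weighted_lp_norm p (F ` {0..1}) r (\<lambda>a. a - \<gamma> * weighted_mean (F ` {0..1}) r (\<lambda>a. a))"
    using lp_norm_simple_function[OF F, of p "\<lambda>a. a - \<gamma> * (\<integral>y. F y \<partial>M01)"]
    unfolding integral_simple_function[OF F] r_def by simp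
  moreover have "lp_norm p F = weighted_lp_norm p (F ` {0..1}) r (\<lambda>a. a)"
    using lp_norm_simple_function[OF F, of p "\<lambda>a. a"] unfolding r_def by simp
  ultimately show ?thesis
    using weighted_inequality[OF v finite_range_simple_function[OF F], of r]
      sum_measure_level_sets[OF F] unfolding r_def by simp
qed

theorem Lp_inequality:
  assumes u: "u \<in> Lp_space p" and F: "F \<in> Lp_space p"
  shows "lp_norm p u * lp_norm p (\<lambda>x. F x - \<gamma> * (\<integral>y. F y \<partial>M01))
    \<le> (op_norm p (op_diff idop T) * lp_norm p u + lp_norm p (\<lambda>x. \<gamma> * u x - T u x)) * lp_norm p F"
proof -
  obtain s where s: "\<And>i. simple_function M01 (s i)" "(\<lambda>i. lp_norm p (\<lambda>x. s i x - F x)) \<longlonglongrightarrow> 0"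
    "(\<lambda>i. \<integral>x. s i x \<partial>M01) \<longlonglongrightarrow> (\<integral>x. F x \<partial>M01)"
    using simple_function_approximation_Lp[OF F one_le_p] by blast
  obtain t where t: "\<And>i. simple_function M01 (t i)" "(\<lambda>i. lp_norm p (\<lambda>x. t i x - u x)) \<longlonglongrightarrow> 0"
    using simple_function_approximation_Lp[OF u one_le_p] by blast
  have sL: "s i \<in> Lp_space p" and tL: "t i \<in> Lp_space p" for i
    using s(1) t(1) p_pos by (auto intro: Lp_space_simple_function)
  let ?E = "\<lambda>f x. f x - \<gamma> * (\<integral>y. f y \<partial>M01)"
  have "(\<lambda>i. lp_norm p (?E (s i))) \<longlonglongrightarrow> lp_norm p (?E F)"
  proof (rule tendsto_lp_norm[OF _ _ one_le_p])
    show "?E (s i) \<in> Lp_space p" "?E F \<in> Lp_space p" for i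
      using sL F p_pos by (auto intro!: Lp_space_diff Lp_space_const)
    have bound: "lp_norm p (\<lambda>x. ?E (s i) x - ?E F x)
        \<le> lp_norm p (\<lambda>x. s i x - F x) + cmod (\<gamma> * (\<integral>y. s i y \<partial>M01) - \<gamma> * (\<integral>y. F y \<partial>M01))" for i
      using lp_norm_diff_le[OF Lp_space_diff[OF sL F p_pos]
          Lp_space_const[OF p_pos, of "\<gamma> * (\<integral>y. s i y \<partial>M01) - \<gamma> * (\<integral>y. F y \<partial>M01)"] one_le_p]
      by (simp add: lp_norm_const[OF p_pos] algebra_simps)
    have "(\<lambda>i. lp_norm p (\<lambda>x. s i x - F x) + cmod (\<gamma> * (\<integral>y. s i y \<partial>M01) - \<gamma> * (\<integral>y. F y \<partial>M01)))
        \<longlonglongrightarrow> 0 + cmod (\<gamma> * (\<integral>y. F y \<partial>M01) - \<gamma> * (\<integral>y. F y \<partial>M01))"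
      by (intro tendsto_intros s(2,3))
    then have "(\<lambda>i. lp_norm p (\<lambda>x. s i x - F x) + cmod (\<gamma> * (\<integral>y. s i y \<partial>M01) - \<gamma> * (\<integral>y. F y \<partial>M01)))
        \<longlonglongrightarrow> 0"
      by simp
    then show "(\<lambda>i. lp_norm p (\<lambda>x. ?E (s i) x - ?E F x)) \<longlonglongrightarrow> 0"
    proof (rule Lim_null_comparison[rotated])
      show "\<forall>\<^sub>F i in sequentially. norm (lp_norm p (\<lambda>x. ?E (s i) x - ?E F x))
          \<le> lp_norm p (\<lambda>x. s i x - F x) + cmod (\<gamma> * (\<integral>y. s i y \<partial>M01) - \<gamma> * (\<integral>y. F y \<partial>M01))"
        using bound by (intro always_eventually allI) (simp add: abs_of_nonneg lp_norm_nonneg)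
    qed
  qed
  moreover have "(\<lambda>i. lp_norm p (s i)) \<longlonglongrightarrow> lp_norm p F"
    by (rule tendsto_lp_norm[OF sL F one_le_p s(2)])
  moreover have "(\<lambda>i. lp_norm p (t i)) \<longlonglongrightarrow> lp_norm p u"
    by (rule tendsto_lp_norm[OF tL u one_le_p t(2)])
  moreover have "(\<lambda>i. lp_norm p (\<lambda>x. \<gamma> * t i x - T (t i) x)) \<longlonglongrightarrow> lp_norm p (\<lambda>x. \<gamma> * u x - T u x)"
    by (rule tendsto_lp_norm_shifted_T[OF tL u t(2)])
  ultimately have "(\<lambda>i. lp_norm p (t i) * lp_norm p (?E (s i))) \<longlonglongrightarrow> lp_norm p u * lp_norm p (?E F)"
    and "(\<lambda>i. (op_norm p (op_diff idop T) * lp_norm p (t i) + lp_norm p (\<lambda>x. \<gamma> * t i x - T (t i) x))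
        * lp_norm p (s i)) \<longlonglongrightarrow>
      (op_norm p (op_diff idop T) * lp_norm p u + lp_norm p (\<lambda>x. \<gamma> * u x - T u x)) * lp_norm p F"
    by (auto intro!: tendsto_intros)
  then show ?thesis
    by (rule LIMSEQ_le) (use simple_function_inequality[OF t(1) s(1)] in auto)
qed

theorem op_norm_I_minus_E_le:
  "op_norm p (op_diff idop (op_scale \<gamma> Eop)) \<le> op_norm p (op_diff idop T)
     + Inf {lp_norm p (op_diff (op_scale \<gamma> idop) T u) | u. u \<in> Lp_space p \<and> lp_norm p u = 1}"
proof -
  have "op_norm p (op_diff idop (op_scale \<gamma> Eop)) - op_norm p (op_diff idop T)
      \<le> Inf {lp_norm p (op_diff (op_scale \<gamma> idop) T u) | u. u \<in> Lp_space p \<and> lp_norm p u = 1}"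
  proof (rule cInf_greatest)
    show "{lp_norm p (op_diff (op_scale \<gamma> idop) T u) | u. u \<in> Lp_space p \<and> lp_norm p u = 1} \<noteq> {}"
      using Lp_space_const[OF p_pos, of 1] lp_norm_const[OF p_pos, of 1] by auto
    fix y
    assume "y \<in> {lp_norm p (op_diff (op_scale \<gamma> idop) T u) | u. u \<in> Lp_space p \<and> lp_norm p u = 1}"
    then obtain u where u: "u \<in> Lp_space p" "lp_norm p u = 1" "y = lp_norm p (\<lambda>x. \<gamma> * u x - T u x)"
      unfolding scaled_I_minus_T_apply by blast
    have "op_norm p (op_diff idop (op_scale \<gamma> Eop)) \<le> op_norm p (op_diff idop T) + y"
    proof (rule op_norm_le[OF p_pos])
      fix f
      assume f: "f \<in> Lp_space p" "lp_norm p f = 1"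
      show "lp_norm p (op_diff idop (op_scale \<gamma> Eop) f) \<le> op_norm p (op_diff idop T) + y"
        using Lp_inequality[OF u(1) f(1), of \<gamma>] u f by (simp add: I_minus_E_apply)
    qed
    then show "op_norm p (op_diff idop (op_scale \<gamma> Eop)) - op_norm p (op_diff idop T) \<le> y"
      by simp
  qed
  then show ?thesis
    by simp
qed

end

section \<open>A lower bound for \<open>\<parallel>I - E\<parallel>\<close>\<close>

definition two_step :: "real \<Rightarrow> complex \<Rightarrow> complex \<Rightarrow> real \<Rightarrow> complex" where
  "two_step a y z x = y * indicator {0..a} x + z * indicator {a<..1} x"

lemma two_step:
  assumes a: "0 \<le> a" "a \<le> 1" and p: "0 < p"
  shows "two_step a y z \<in> Lp_space p"
    and "lp_integral p (\<lambda>x. two_step a y z x - c) = a * cmod (y - c) powr p + (1 - a) * cmod (z - c) powr p"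
    and "(\<integral>x. two_step a y z x \<partial>M01) = of_real a * y + of_real (1 - a) * z"
proof -
  note S = measure_M01_interval[OF a]
  define J where "J i = (if i = (0::nat) then {0..a} else {a<..1})" for i
  have J: "finite {0::nat, 1}" "disjoint_family_on J {0, 1}" "\<And>i. i \<in> {0, 1} \<Longrightarrow> J i \<in> sets M01"
    unfolding J_def disjoint_family_on_def using S by auto
  show "two_step a y z \<in> Lp_space p"
    unfolding two_step_def using S p by (intro Lp_space_add Lp_space_scale Lp_space_indicator)
  have "lp_integral p (\<lambda>x. two_step a y z x - c)
      = lp_integral p (\<lambda>x. \<Sum>i\<in>{0, 1}. (if i = 0 then y - c else z - c) * indicator (J i) x)"
    by (rule lp_integral_cong) (auto simp: two_step_def J_def indicator_def)
  then show "lp_integral p (\<lambda>x. two_step a y z x - c) = a * cmod (y - c) powr p + (1 - a) * cmod (z - c) powr p"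
    using lp_integral_step_function[OF J] S by (simp add: J_def)
  have "(\<integral>x. two_step a y z x \<partial>M01) = (\<integral>x. (\<Sum>i\<in>{0, 1}. (if i = 0 then y else z) * indicator (J i) x) \<partial>M01)"
    by (rule Bochner_Integration.integral_cong) (auto simp: two_step_def J_def indicator_def)
  also have "\<dots> = (\<Sum>i\<in>{0::nat, 1}. of_real (measure M01 (J i)) * (if i = 0 then y else z))"
    by (rule integral_step_function[OF J(1,3)])
  also have "\<dots> = of_real a * y + of_real (1 - a) * z"
    using S by (simp add: J_def)
  finally show "(\<integral>x. two_step a y z x \<partial>M01) = of_real a * y + of_real (1 - a) * z" .
qed

lemma bdd_above_I_minus_E:
  assumes p: "1 \<le> p"
  shows "bdd_above {lp_norm p (op_diff idop (op_scale 1 Eop) f) |f. f \<in> Lp_space p \<and> lp_norm p f = 1}"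
proof (rule bdd_aboveI[where M=3])
  have p0: "0 < p"
    using p by simp
  fix y
  assume "y \<in> {lp_norm p (op_diff idop (op_scale 1 Eop) f) |f. f \<in> Lp_space p \<and> lp_norm p f = 1}"
  then obtain f where f: "f \<in> Lp_space p" "lp_norm p f = 1" "y = lp_norm p (\<lambda>x. f x - (\<integral>y. f y \<partial>M01))"
    unfolding I_minus_E_apply by auto
  have "cmod (\<integral>y. f y \<partial>M01) \<le> (\<integral>y. cmod (f y) \<partial>M01)"
    by (rule integral_norm_bound)
  also have "\<dots> \<le> (\<integral>y. 1 + cmod (f y) powr p \<partial>M01)"
    using Lp_space_integrable[OF f(1) p] Lp_space_integrable_powr[OF f(1)] le_one_plus_powr[OF p]
    by (intro integral_mono) auto
  also have "\<dots> = 2"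
    using Lp_space_integrable_powr[OF f(1)] f(2) lp_norm_powr[OF p0, of f]
    by (simp add: lp_integral_def measure_M01_space)
  finally have "cmod (\<integral>y. f y \<partial>M01) \<le> 2" .
  moreover have "y \<le> lp_norm p f + lp_norm p (\<lambda>x. \<integral>y. f y \<partial>M01)"
    unfolding f(3) using f(1) p0 by (intro lp_norm_diff_le Lp_space_const p)
  ultimately show "y \<le> 3"
    using f(2) lp_norm_const[OF p0] by simp
qed

lemma two_step_ratio_le_op_norm:
  assumes p: "1 \<le> p" and a: "0 \<le> a" "a \<le> 1"
    and m: "m = of_real a * y + of_real (1 - a) * z"
    and num: "num = a * cmod (y - m) powr p + (1 - a) * cmod (z - m) powr p"
    and den: "den = a * cmod y powr p + (1 - a) * cmod z powr p" and pos: "0 < den"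
  shows "(num / den) powr (1 / p) \<le> op_norm p (op_diff idop (op_scale 1 Eop))"
proof -
  have p0: "0 < p"
    using p by simp
  define f where "f = two_step a y z"
  note f = two_step[OF a p0, of y z, folded f_def]
  have norm_f: "lp_norm p f = den powr (1 / p)"
    using f(2)[of 0] unfolding den by (simp add: lp_norm_eq_lp_integral)
  have norm_Ef: "lp_norm p (op_diff idop (op_scale 1 Eop) f) = num powr (1 / p)"
    using f(2)[of m] f(3) unfolding I_minus_E_apply m num by (simp add: lp_norm_eq_lp_integral)
  have "lp_norm p (op_diff idop (op_scale 1 Eop) f) \<le> op_norm p (op_diff idop (op_scale 1 Eop)) * lp_norm p f"
  proof (rule lp_norm_le_op_norm[OF bdd_above_I_minus_E[OF p] _ f(1) _ p0])
    show "lp_norm p (op_diff idop (op_scale 1 Eop) (\<lambda>x. c * f x)) = cmod c * lp_norm p (op_diff idop (op_scale 1 Eop) f)" for c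
      using lp_norm_scale[OF p0, of c "\<lambda>x. f x - (\<integral>y. f y \<partial>M01)"] by (simp add: I_minus_E_apply algebra_simps)
    show "0 < lp_norm p f"
      using pos unfolding norm_f by simp
  qed
  moreover have "0 \<le> num"
    unfolding num using a by simp
  ultimately show ?thesis
    using pos unfolding norm_f norm_Ef by (simp add: powr_divide divide_le_eq)
qed

lemma Cp_extremal_identities:
  fixes p \<alpha> :: real
  assumes p: "1 < p" and \<alpha>: "0 < \<alpha>" "\<alpha> < 1"
  defines "r \<equiv> 1 / (p - 1)"
  defines "s \<equiv> \<alpha> powr (- r)" and "t \<equiv> (1 - \<alpha>) powr (- r)"
  shows "\<alpha> * s powr p + (1 - \<alpha>) * t powr p = s + t"
    and "\<alpha> * ((1 - \<alpha>) * (s + t)) powr p + (1 - \<alpha>) * (\<alpha> * (s + t)) powr p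
       = (s + t) * ((\<alpha> powr (p - 1) + (1 - \<alpha>) powr (p - 1)) * (\<alpha> powr r + (1 - \<alpha>) powr r) powr (p - 1))"
proof -
  define b where "b = 1 - \<alpha>"
  have b: "0 < b"
    unfolding b_def using \<alpha> by simp
  have r: "r * (p - 1) = 1"
    unfolding r_def using p by simp
  have st: "0 < s" "0 < t"
    unfolding s_def t_def using \<alpha> b b_def by auto
  have pow: "x powr p = x * x powr (p - 1)" if "0 < x" for x :: real
    using that powr_add[of x 1 "p - 1"] by simp
  \<comment> \<open>The exponent \<open>-r\<close> is chosen so that \<open>x * (x powr -r) powr p = x powr -r\<close>.\<close>
  have self: "x * (x powr (- r)) powr p = x powr (- r)" if "0 < x" for x :: real
  proof -
    have "- r * p = - r - 1"
      using r by (simp add: algebra_simps)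
    then have "(x powr (- r)) powr p = x powr (- r - 1)"
      by (simp add: powr_powr)
    moreover have "x powr (- r) = x powr (- r - 1) * x"
      using powr_add[of x "- r - 1" 1] that by simp
    ultimately show ?thesis
      by simp
  qed
  show "\<alpha> * s powr p + (1 - \<alpha>) * t powr p = s + t"
    unfolding s_def t_def using self[OF \<alpha>(1)] self[OF b] b_def by simp
  have sum_r: "\<alpha> powr r + b powr r = (s + t) * (\<alpha> * b) powr r"
    unfolding s_def t_def b_def[symmetric] using \<alpha> b
    by (simp add: powr_mult powr_minus field_simps)
  have "(\<alpha> powr r + b powr r) powr (p - 1) = (s + t) powr (p - 1) * (\<alpha> * b)"
    unfolding sum_r using \<alpha> b st r by (simp add: powr_mult powr_powr)
  moreover have "\<alpha> * (b * (s + t)) powr p + b * (\<alpha> * (s + t)) powr p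
      = (s + t) * (s + t) powr (p - 1) * (\<alpha> * b) * (\<alpha> powr (p - 1) + b powr (p - 1))"
  proof -
    have "\<alpha> * (b * (s + t)) powr p + b * (\<alpha> * (s + t)) powr p
        = \<alpha> * (b powr p * (s + t) powr p) + b * (\<alpha> powr p * (s + t) powr p)"
      using \<alpha> b st by (simp add: powr_mult)
    also have "\<dots> = (s + t) * (s + t) powr (p - 1) * (\<alpha> * b) * (\<alpha> powr (p - 1) + b powr (p - 1))"
      unfolding pow[OF \<alpha>(1)] pow[OF b] pow[OF add_pos_pos[OF st]] by (simp add: algebra_simps)
    finally show ?thesis .
  qed
  ultimately have "\<alpha> * (b * (s + t)) powr p + b * (\<alpha> * (s + t)) powr p
       = (s + t) * ((\<alpha> powr (p - 1) + b powr (p - 1)) * (\<alpha> powr r + b powr r) powr (p - 1))"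
    by (simp only: ac_simps)
  then show "\<alpha> * ((1 - \<alpha>) * (s + t)) powr p + (1 - \<alpha>) * (\<alpha> * (s + t)) powr p
       = (s + t) * ((\<alpha> powr (p - 1) + (1 - \<alpha>) powr (p - 1)) * (\<alpha> powr r + (1 - \<alpha>) powr r) powr (p - 1))"
    unfolding b_def .
qed

lemma one_le_op_norm_I_minus_E:
  assumes p: "1 \<le> p"
  shows "1 \<le> op_norm p (op_diff idop (op_scale 1 Eop))"
  using two_step_ratio_le_op_norm[OF p, where a="1/2" and m=0 and y=1 and z="-1" and num=1 and den=1]
  by simp

lemma two_le_op_norm_I_minus_E_L1: "2 \<le> op_norm 1 (op_diff idop (op_scale 1 Eop))"
proof (rule field_le_epsilon)
  fix e :: real
  assume e: "0 < e"
  define t where "t = min (1/2) (e/2)"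
  have t: "0 < t" "t < 1" "t \<le> e/2"
    using e unfolding t_def by auto
  \<comment> \<open>The test function equal to \<open>1/t\<close> on \<open>[0,t]\<close> and \<open>0\<close> elsewhere has mean \<open>1\<close>.\<close>
  have "cmod (complex_of_real (1 / t) - 1) = 1 / t - 1"
  proof -
    have "0 \<le> 1 / t - 1"
      using t by (simp add: field_simps)
    then show ?thesis
      by (metis abs_of_nonneg norm_of_real of_real_1 of_real_diff)
  qed
  then have "((2 - 2 * t) / 1) powr (1 / 1) \<le> op_norm 1 (op_diff idop (op_scale 1 Eop))"
    using t by (intro two_step_ratio_le_op_norm[where m=1 and y="of_real (1 / t)" and z=0])
      (auto simp: field_simps norm_divide)
  then show "2 \<le> op_norm 1 (op_diff idop (op_scale 1 Eop)) + e"
    using t by simp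
qed

lemma Cp_term_le_op_norm_I_minus_E:
  assumes p: "1 < p" and \<alpha>: "0 < \<alpha>" "\<alpha> < 1"
  shows "(\<alpha> powr (p - 1) + (1 - \<alpha>) powr (p - 1)) powr (1 / p)
      * (\<alpha> powr (1 / (p - 1)) + (1 - \<alpha>) powr (1 / (p - 1))) powr (1 - 1 / p)
    \<le> op_norm p (op_diff idop (op_scale 1 Eop))"
proof -
  define r where "r = 1 / (p - 1)"
  define s where "s = \<alpha> powr (- r)"
  define t where "t = (1 - \<alpha>) powr (- r)"
  define P where "P = \<alpha> powr (p - 1) + (1 - \<alpha>) powr (p - 1)"
  define Q where "Q = \<alpha> powr r + (1 - \<alpha>) powr r"
  note id = Cp_extremal_identities[OF p \<alpha>, folded r_def, folded s_def t_def, folded P_def Q_def]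
  have st: "0 < s" "0 < t"
    unfolding s_def t_def using \<alpha> by auto
  \<comment> \<open>The extremal test function takes the values \<open>s\<close> on \<open>[0,\<alpha>]\<close> and \<open>-t\<close> on \<open>(\<alpha>,1]\<close>.\<close>
  define m where "m = complex_of_real (\<alpha> * s - (1 - \<alpha>) * t)"
  have "of_real s - m = of_real ((1 - \<alpha>) * (s + t))" "- of_real t - m = - of_real (\<alpha> * (s + t))"
    unfolding m_def by (simp_all add: algebra_simps)
  moreover have "0 \<le> (1 - \<alpha>) * (s + t)" "0 \<le> \<alpha> * (s + t)"
    using \<alpha> st by auto
  ultimately have "cmod (of_real s - m) = (1 - \<alpha>) * (s + t)" "cmod (- of_real t - m) = \<alpha> * (s + t)"
    by (metis abs_of_nonneg norm_of_real norm_minus_cancel)+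
  then have num: "(s + t) * (P * Q powr (p - 1))
      = \<alpha> * cmod (of_real s - m) powr p + (1 - \<alpha>) * cmod (- of_real t - m) powr p"
    by (simp only: id(2))
  have den: "s + t = \<alpha> * cmod (complex_of_real s) powr p + (1 - \<alpha>) * cmod (- complex_of_real t) powr p"
    by (simp only: norm_minus_cancel norm_of_real abs_of_pos[OF st(1)] abs_of_pos[OF st(2)] id(1))
  have mean: "m = of_real \<alpha> * of_real s + of_real (1 - \<alpha>) * - of_real t"
    unfolding m_def by (simp add: algebra_simps)
  have "((s + t) * (P * Q powr (p - 1)) / (s + t)) powr (1 / p) \<le> op_norm p (op_diff idop (op_scale 1 Eop))"
    by (rule two_step_ratio_le_op_norm[OF less_imp_le[OF p] _ _ mean num den]) (use \<alpha> st in auto)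
  moreover have "((s + t) * (P * Q powr (p - 1)) / (s + t)) powr (1 / p) = P powr (1 / p) * Q powr (1 - 1 / p)"
    using st p unfolding P_def Q_def by (simp add: powr_mult powr_powr diff_divide_distrib)
  ultimately show ?thesis
    unfolding P_def Q_def r_def by simp
qed

lemma Cp_le_op_norm_I_minus_E:
  assumes p: "1 \<le> p"
  shows "Cp p \<le> op_norm p (op_diff idop (op_scale 1 Eop))"
proof (cases "p = 1")
  case True
  then show ?thesis
    using two_le_op_norm_I_minus_E_L1 by (simp add: Cp_def)
next
  case False
  then have p1: "1 < p"
    using p by simp
  have "(SUP \<alpha>\<in>{0..1::real}. (\<alpha> powr (p - 1) + (1 - \<alpha>) powr (p - 1)) powr (1 / p)
        * (\<alpha> powr (1 / (p - 1)) + (1 - \<alpha>) powr (1 / (p - 1))) powr (1 - 1 / p))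
      \<le> op_norm p (op_diff idop (op_scale 1 Eop))"
  proof (rule cSUP_least)
    fix \<alpha> :: real
    assume "\<alpha> \<in> {0..1}"
    then consider "\<alpha> = 0 \<or> \<alpha> = 1" | "0 < \<alpha>" "\<alpha> < 1"
      by fastforce
    then show "(\<alpha> powr (p - 1) + (1 - \<alpha>) powr (p - 1)) powr (1 / p)
        * (\<alpha> powr (1 / (p - 1)) + (1 - \<alpha>) powr (1 / (p - 1))) powr (1 - 1 / p)
      \<le> op_norm p (op_diff idop (op_scale 1 Eop))"
      by cases (use one_le_op_norm_I_minus_E[OF p] Cp_term_le_op_norm_I_minus_E[OF p1] in auto)
  qed simp
  then show ?thesis
    using False by (simp add: Cp_def)
qed

theorem theorem1p3:
  fixes p :: real and T :: "(real \<Rightarrow> complex) \<Rightarrow> (real \<Rightarrow> complex)"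
  assumes "1 \<le> p"
    and "bounded_op p T"
    and "narrow p T"
  shows "(\<forall>\<gamma>::complex.
           op_norm p (op_diff idop T)
           + Inf {lp_norm p (op_diff (op_scale \<gamma> idop) T u) | u. u \<in> Lp_space p \<and> lp_norm p u = 1}
           \<ge> op_norm p (op_diff idop (op_scale \<gamma> Eop)))
       \<and> op_norm p (op_diff idop T)
           + Inf {lp_norm p (op_diff idop T u) | u. u \<in> Lp_space p \<and> lp_norm p u = 1}
           \<ge> Cp p"
proof -
  interpret narrow_operator p T
    using assms by unfold_locales
  have "op_diff (op_scale 1 idop) T = op_diff idop T"
    by (simp add: op_diff_def op_scale_def idop_def)
  then have "Cp p \<le> op_norm p (op_diff idop T)
      + Inf {lp_norm p (op_diff idop T u) | u. u \<in> Lp_space p \<and> lp_norm p u = 1}"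
    using Cp_le_op_norm_I_minus_E[OF assms(1)] op_norm_I_minus_E_le[of 1] by simp
  then show ?thesis
    using op_norm_I_minus_E_le by simp
qed

end
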